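(* Let $(M^3,\,g,\,f)$ be a three-dimensional Miao-Tam critical metric. Then \[ f^2|C|^2 = -4f\,C_{ijk}\nabla^if\,\mathring{R}^{jk}, \] where $C$ is the Cotton tensor and $\mathring{R}_{jk}$ are the components of the traceless Ricci tensor.
   Context: A Miao-Tam critical metric is a triple $(M^n,g,f)$ where $(M^n,g)$ is a compact Riemannian manifold of dimension $n\ge 3$ with smooth boundary $\partial M$, and $f:M\to\mathbb{R}$ is a smooth function with $f^{-1}(0)=\partial M$ satisfying $-(\Delta f)g+\mathrm{Hess}\, f-f\,\mathrm{Ric}=g$, where $\mathrm{Ric}$, $\mathrm{Hess}$, $\Delta$ are the Ricci tensor, Hessian and Laplacian of $g$. The traceless Ricci tensor is $\mathring{R}_{ij}=R_{ij}-\frac{R}{3}g_{ij}$ with $R$ the scalar curvature. The Cotton tensor in dimension 3 is $C_{ijk}=\nabla_{i}R_{jk}-\nabla_{j}R_{ik}-\frac{1}{4}\big(\nabla_{i}R\, g_{jk}-\nabla_{j}R\, g_{ik}\big)$, and $|C|^2=C_{ijk}C^{ijk}$. Indices are raised with $g$ and repeated indices are summed. *)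

theory Defs
  imports "HOL-Analysis.Analysis" "HOL-Library.Numeral_Type"
begin

text \<open>Local coordinate description of a Riemannian 3-manifold: a coordinate
domain U (open subset of R^3), metric coefficients g x i j, indices of type 3.\<close>

type_synonym pt = "real^3"
type_synonym idx = 3

definition pd :: "idx \<Rightarrow> (pt \<Rightarrow> real) \<Rightarrow> pt \<Rightarrow> real" where
  "pd i h x = deriv (\<lambda>t. h (x + t *\<^sub>R axis i 1)) 0"

fun iter_pd :: "idx list \<Rightarrow> (pt \<Rightarrow> real) \<Rightarrow> pt \<Rightarrow> real" where
  "iter_pd [] h = h"
| "iter_pd (i # is) h = pd i (iter_pd is h)"

definition smooth_on :: "pt set \<Rightarrow> (pt \<Rightarrow> real) \<Rightarrow> bool" where
  "smooth_on U h \<longleftrightarrow> (\<forall>is. continuous_on U (iter_pd is h) \<and>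
       (\<forall>x\<in>U. iter_pd is h differentiable (at x)))"

definition riem_metric_on :: "pt set \<Rightarrow> (pt \<Rightarrow> idx \<Rightarrow> idx \<Rightarrow> real) \<Rightarrow> bool" where
  "riem_metric_on U g \<longleftrightarrow>
     (\<forall>i j. smooth_on U (\<lambda>x. g x i j)) \<and>
     (\<forall>x\<in>U. \<forall>i j. g x i j = g x j i) \<and>
     (\<forall>x\<in>U. \<forall>v::real^3. v \<noteq> 0 \<longrightarrow> (\<Sum>i\<in>UNIV. \<Sum>j\<in>UNIV. g x i j * v$i * v$j) > 0)"

definition ginv :: "(pt \<Rightarrow> idx \<Rightarrow> idx \<Rightarrow> real) \<Rightarrow> pt \<Rightarrow> idx \<Rightarrow> idx \<Rightarrow> real" where
  "ginv g x i j = matrix_inv (\<chi> a b. g x a b) $ i $ j"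

text \<open>Christoffel symbols, christoffel g x k i j = Gamma^k_ij.\<close>
definition christoffel :: "(pt \<Rightarrow> idx \<Rightarrow> idx \<Rightarrow> real) \<Rightarrow> pt \<Rightarrow> idx \<Rightarrow> idx \<Rightarrow> idx \<Rightarrow> real" where
  "christoffel g x k i j = (1/2) * (\<Sum>l\<in>UNIV. ginv g x k l *
      (pd i (\<lambda>y. g y j l) x + pd j (\<lambda>y. g y i l) x - pd l (\<lambda>y. g y i j) x))"

text \<open>Ricci tensor (sign convention: positive on the round sphere).\<close>
definition ricci :: "(pt \<Rightarrow> idx \<Rightarrow> idx \<Rightarrow> real) \<Rightarrow> pt \<Rightarrow> idx \<Rightarrow> idx \<Rightarrow> real" where
  "ricci g x i j = (\<Sum>k\<in>UNIV. pd k (\<lambda>y. christoffel g y k i j) x - pd j (\<lambda>y. christoffel g y k i k) x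
      + (\<Sum>l\<in>UNIV. christoffel g x k k l * christoffel g x l i j
             - christoffel g x k j l * christoffel g x l i k))"

definition scal :: "(pt \<Rightarrow> idx \<Rightarrow> idx \<Rightarrow> real) \<Rightarrow> pt \<Rightarrow> real" where
  "scal g x = (\<Sum>i\<in>UNIV. \<Sum>j\<in>UNIV. ginv g x i j * ricci g x i j)"

definition traceless_ricci :: "(pt \<Rightarrow> idx \<Rightarrow> idx \<Rightarrow> real) \<Rightarrow> pt \<Rightarrow> idx \<Rightarrow> idx \<Rightarrow> real" where
  "traceless_ricci g x i j = ricci g x i j - scal g x / 3 * g x i j"

definition hess :: "(pt \<Rightarrow> idx \<Rightarrow> idx \<Rightarrow> real) \<Rightarrow> (pt \<Rightarrow> real) \<Rightarrow> pt \<Rightarrow> idx \<Rightarrow> idx \<Rightarrow> real" where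
  "hess g f x i j = pd i (pd j f) x - (\<Sum>k\<in>UNIV. christoffel g x k i j * pd k f x)"

definition laplacian :: "(pt \<Rightarrow> idx \<Rightarrow> idx \<Rightarrow> real) \<Rightarrow> (pt \<Rightarrow> real) \<Rightarrow> pt \<Rightarrow> real" where
  "laplacian g f x = (\<Sum>i\<in>UNIV. \<Sum>j\<in>UNIV. ginv g x i j * hess g f x i j)"

definition cov_deriv2 :: "(pt \<Rightarrow> idx \<Rightarrow> idx \<Rightarrow> real) \<Rightarrow> (pt \<Rightarrow> idx \<Rightarrow> idx \<Rightarrow> real)
     \<Rightarrow> pt \<Rightarrow> idx \<Rightarrow> idx \<Rightarrow> idx \<Rightarrow> real" where
  "cov_deriv2 g T x i j k = pd i (\<lambda>y. T y j k) x
     - (\<Sum>l\<in>UNIV. christoffel g x l i j * T x l k + christoffel g x l i k * T x j l)"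

definition cotton :: "(pt \<Rightarrow> idx \<Rightarrow> idx \<Rightarrow> real) \<Rightarrow> pt \<Rightarrow> idx \<Rightarrow> idx \<Rightarrow> idx \<Rightarrow> real" where
  "cotton g x i j k = cov_deriv2 g (ricci g) x i j k - cov_deriv2 g (ricci g) x j i k
     - (1/4) * (pd i (scal g) x * g x j k - pd j (scal g) x * g x i k)"

definition cotton_norm2 :: "(pt \<Rightarrow> idx \<Rightarrow> idx \<Rightarrow> real) \<Rightarrow> pt \<Rightarrow> real" where
  "cotton_norm2 g x = (\<Sum>i\<in>UNIV. \<Sum>j\<in>UNIV. \<Sum>k\<in>UNIV. \<Sum>a\<in>UNIV. \<Sum>b\<in>UNIV. \<Sum>c\<in>UNIV.
      ginv g x i a * ginv g x j b * ginv g x k c * cotton g x i j k * cotton g x a b c)"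

definition miao_tam_eq_on :: "pt set \<Rightarrow> (pt \<Rightarrow> idx \<Rightarrow> idx \<Rightarrow> real) \<Rightarrow> (pt \<Rightarrow> real) \<Rightarrow> bool" where
  "miao_tam_eq_on U g f \<longleftrightarrow> (\<forall>x\<in>U. \<forall>i j.
      - laplacian g f x * g x i j + hess g f x i j - f x * ricci g x i j = g x i j)"

end

theory Submission
  imports Defs
begin

text \<open>In dimension three the Riemann tensor is determined by the Ricci tensor. Differentiating
  the Miao-Tam equation \<open>f Ric = Hess f - (\<Delta>f + 1) g\<close> and skew-symmetrising, the commutator
  of covariant derivatives of \<open>Hess f\<close> produces \<open>Rm(\<nabla>f)\<close>, which the three-dimensional
  decomposition rewrites through \<open>Ric\<close> and \<open>\<nabla>f\<close>. This gives
  \<open>f C\<^sub>i\<^sub>j\<^sub>k = -2 (\<nabla>\<^sub>if R\<^sub>j\<^sub>k - \<nabla>\<^sub>jf R\<^sub>i\<^sub>k) + u\<^sub>i g\<^sub>j\<^sub>k - u\<^sub>j g\<^sub>i\<^sub>k\<close>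
  for some covector \<open>u\<close>. Pairing with \<open>C\<close>, which is skew in \<open>i, j\<close> and, by the contracted
  Bianchi identity, trace-free in \<open>j, k\<close>, kills the trace terms and doubles the first one.\<close>

section \<open>Partial derivatives along coordinate axes\<close>

definition has_pd :: "idx \<Rightarrow> (pt \<Rightarrow> real) \<Rightarrow> pt \<Rightarrow> real \<Rightarrow> bool" where
  "has_pd i h y D \<longleftrightarrow> ((\<lambda>t. h (y + t *\<^sub>R axis i 1)) has_real_derivative D) (at 0)"

lemma pd_eqI: "has_pd i h y D \<Longrightarrow> pd i h y = D"
  unfolding has_pd_def pd_def by (rule DERIV_imp_deriv)

lemma has_real_derivative_along_line:
  fixes h :: "pt \<Rightarrow> real"
  assumes "h differentiable (at (w + t0 *\<^sub>R v))"
  shows "((\<lambda>t. h (w + t *\<^sub>R v)) has_real_derivative frechet_derivative h (at (w + t0 *\<^sub>R v)) v) (at t0)"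
proof -
  let ?z = "w + t0 *\<^sub>R v"
  let ?D = "frechet_derivative h (at ?z)"
  have hd: "(h has_derivative ?D) (at ?z)" using assms frechet_derivative_works by blast
  have ld: "((\<lambda>t. w + t *\<^sub>R v) has_derivative (\<lambda>t. t *\<^sub>R v)) (at t0)"
    by (auto intro!: derivative_eq_intros)
  have c: "((h \<circ> (\<lambda>t. w + t *\<^sub>R v)) has_derivative (?D \<circ> (\<lambda>t. t *\<^sub>R v))) (at t0)"
    by (rule diff_chain_at[OF ld]) (simp add: hd)
  have lin: "linear ?D" using hd has_derivative_linear by blast
  have "(?D \<circ> (\<lambda>t. t *\<^sub>R v)) = (*) (?D v)"
    using linear_cmul[OF lin] by (auto simp: o_def fun_eq_iff mult.commute)
  then have "((\<lambda>t. h (w + t *\<^sub>R v)) has_derivative (*) (?D v)) (at t0)"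
    using c by (simp add: o_def)
  then show ?thesis unfolding has_field_derivative_def by simp
qed

lemma pd_eq_frechet_derivative:
  assumes "h differentiable (at y)"
  shows "pd i h y = frechet_derivative h (at y) (axis i 1)"
  using has_real_derivative_along_line[of h y 0 "axis i 1"] assms unfolding pd_def
  by (auto intro: DERIV_imp_deriv)

lemma has_real_derivative_pd_along_axis:
  fixes h :: "pt \<Rightarrow> real"
  assumes "h differentiable (at (w + t0 *\<^sub>R axis i 1))"
  shows "((\<lambda>t. h (w + t *\<^sub>R axis i 1)) has_real_derivative pd i h (w + t0 *\<^sub>R axis i 1)) (at t0)"
  using has_real_derivative_along_line[OF assms] pd_eq_frechet_derivative[OF assms] by simp

lemma has_pd_pd: "h differentiable (at y) \<Longrightarrow> has_pd i h y (pd i h y)"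
  unfolding has_pd_def using has_real_derivative_pd_along_axis[of h y 0 i] by simp

lemma has_pd_add: "has_pd i h y A \<Longrightarrow> has_pd i k y B \<Longrightarrow> has_pd i (\<lambda>z. h z + k z) y (A + B)"
  unfolding has_pd_def by (rule DERIV_add)

lemma has_pd_diff: "has_pd i h y A \<Longrightarrow> has_pd i k y B \<Longrightarrow> has_pd i (\<lambda>z. h z - k z) y (A - B)"
  unfolding has_pd_def by (rule DERIV_diff)

lemma has_pd_mult: "has_pd i h y A \<Longrightarrow> has_pd i k y B \<Longrightarrow> has_pd i (\<lambda>z. h z * k z) y (A * k y + h y * B)"
  unfolding has_pd_def by (drule (1) DERIV_mult) (simp add: mult.commute)

lemma has_pd_const: "has_pd i (\<lambda>z. c) y 0"
  unfolding has_pd_def by simp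

lemma has_pd_sum:
  assumes "\<And>a. a \<in> S \<Longrightarrow> has_pd i (F a) y (D a)"
  shows "has_pd i (\<lambda>z. \<Sum>a\<in>S. F a z) y (\<Sum>a\<in>S. D a)"
  using assms unfolding has_pd_def by (intro DERIV_sum) auto

lemma has_pd_inverse:
  assumes "has_pd i h y A" "h y \<noteq> 0"
  shows "has_pd i (\<lambda>z. inverse (h z)) y (- (inverse (h y) * (inverse (h y) * A)))"
proof -
  have "((\<lambda>t. inverse (h (y + t *\<^sub>R axis i 1))) has_real_derivative
      - (A * inverse (h y ^ Suc (Suc 0)))) (at 0)"
    using DERIV_inverse_fun[OF assms(1)[unfolded has_pd_def]] assms(2) by simp
  then show ?thesis unfolding has_pd_def by (simp add: inverse_mult_distrib ac_simps)
qed

lemma pd_const: "pd i (\<lambda>y. c) y = 0"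
  by (rule pd_eqI, rule has_pd_const)

lemma eventually_line_in_open:
  fixes y v :: pt
  assumes "open U" "y \<in> U"
  shows "eventually (\<lambda>t. y + t *\<^sub>R v \<in> U) (nhds (0::real))"
proof -
  have "((\<lambda>t::real. y + t *\<^sub>R v) has_derivative (\<lambda>t. t *\<^sub>R v)) (at 0)"
    by (auto intro!: derivative_eq_intros)
  then have "isCont (\<lambda>t::real. y + t *\<^sub>R v) 0" by (rule has_derivative_continuous)
  then have "((\<lambda>t::real. y + t *\<^sub>R v) \<longlongrightarrow> y) (at 0)" by (simp add: isCont_def)
  then have "eventually (\<lambda>t. y + t *\<^sub>R v \<in> U) (at 0)"
    using topological_tendstoD assms by blast
  then show ?thesis using assms(2) by (simp add: eventually_nhds_conv_at)
qed

lemma pd_cong_open: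
  assumes "open U" "y \<in> U" "\<And>z. z \<in> U \<Longrightarrow> h z = k z"
  shows "pd i h y = pd i k y"
proof -
  have ev: "eventually (\<lambda>t. h (y + t *\<^sub>R axis i 1) = k (y + t *\<^sub>R axis i 1)) (nhds 0)"
    using eventually_line_in_open[OF assms(1,2), of "axis i 1"] by (rule eventually_mono) (use assms(3) in auto)
  have "\<And>D. DERIV (\<lambda>t. h (y + t *\<^sub>R axis i 1)) 0 :> D \<longleftrightarrow> DERIV (\<lambda>t. k (y + t *\<^sub>R axis i 1)) 0 :> D"
    by (rule DERIV_cong_ev[OF refl ev refl])
  then show ?thesis unfolding pd_def deriv_def by simp
qed

lemma differentiable_cong_open:
  assumes "open U" "y \<in> U" "\<And>z. z \<in> U \<Longrightarrow> h z = k z" "h differentiable (at y)"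
  shows "k differentiable (at y)"
proof -
  obtain D where "(h has_derivative D) (at y)" using assms(4) differentiable_def by blast
  then have "(k has_derivative D) (at y)"
    by (rule has_derivative_transform_within_open[OF _ assms(1,2)]) (use assms(3) in auto)
  then show ?thesis using differentiable_def by blast
qed

definition differentiable_continuous_on :: "pt set \<Rightarrow> (pt \<Rightarrow> real) \<Rightarrow> bool" where
  "differentiable_continuous_on U h \<longleftrightarrow> continuous_on U h \<and> (\<forall>x\<in>U. h differentiable (at x))"

lemma iter_pd_snoc: "iter_pd (is @ [i]) h = iter_pd is (pd i h)"
  by (induction "is") auto

lemma smooth_on_iff_pd: "smooth_on U h \<longleftrightarrow> differentiable_continuous_on U h \<and> (\<forall>i. smooth_on U (pd i h))"
proof
  assume s: "smooth_on U h"
  have "differentiable_continuous_on U h" using s[unfolded smooth_on_def, rule_format, of "[]"] by (simp add: differentiable_continuous_on_def)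
  moreover have "smooth_on U (pd i h)" for i
    unfolding smooth_on_def using s[unfolded smooth_on_def] by (metis iter_pd_snoc)
  ultimately show "differentiable_continuous_on U h \<and> (\<forall>i. smooth_on U (pd i h))" by blast
next
  assume a: "differentiable_continuous_on U h \<and> (\<forall>i. smooth_on U (pd i h))"
  show "smooth_on U h" unfolding smooth_on_def
  proof
    fix "is" show "continuous_on U (iter_pd is h) \<and> (\<forall>x\<in>U. iter_pd is h differentiable at x)"
    proof (cases "is" rule: rev_cases)
      case Nil then show ?thesis using a by (simp add: differentiable_continuous_on_def)
    next
      case (snoc js i)
      then show ?thesis using a[THEN conjunct2, rule_format, of i] unfolding smooth_on_def
        by (simp add: iter_pd_snoc)
    qed
  qed
qed

lemma smooth_on_coinduct:
  assumes "P h" and step: "\<And>h. P h \<Longrightarrow> differentiable_continuous_on U h \<and> (\<forall>i. P (pd i h))"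
  shows "smooth_on U h"
proof -
  have "\<forall>h. P h \<longrightarrow> differentiable_continuous_on U (iter_pd is h)" for "is"
  proof (induction "is" rule: rev_induct)
    case Nil then show ?case using step by simp
  next
    case (snoc i js)
    then show ?case using step by (simp add: iter_pd_snoc)
  qed
  then show ?thesis using assms(1) unfolding smooth_on_def differentiable_continuous_on_def by blast
qed

lemma smooth_on_pd: "smooth_on U h \<Longrightarrow> smooth_on U (pd i h)"
  using smooth_on_iff_pd by blast

lemma smooth_on_differentiable: "smooth_on U h \<Longrightarrow> y \<in> U \<Longrightarrow> h differentiable (at y)"
  using smooth_on_iff_pd differentiable_continuous_on_def by blast

lemma smooth_on_continuous: "smooth_on U h \<Longrightarrow> continuous_on U h"
  using smooth_on_iff_pd differentiable_continuous_on_def by blast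

lemma smooth_on_has_pd: "smooth_on U h \<Longrightarrow> y \<in> U \<Longrightarrow> has_pd i h y (pd i h y)"
  by (rule has_pd_pd, rule smooth_on_differentiable)

text \<open>Closure properties of \<open>smooth_on\<close> are obtained coinductively: the set of
  functions generated from smooth ones by the field operations is closed under \<open>pd\<close>.\<close>

inductive_set smooth_terms :: "pt set \<Rightarrow> (pt \<Rightarrow> real) set" for U where
  base: "smooth_on U h \<Longrightarrow> h \<in> smooth_terms U"
| add: "h \<in> smooth_terms U \<Longrightarrow> k \<in> smooth_terms U \<Longrightarrow> (\<lambda>y. h y + k y) \<in> smooth_terms U"
| mult: "h \<in> smooth_terms U \<Longrightarrow> k \<in> smooth_terms U \<Longrightarrow> (\<lambda>y. h y * k y) \<in> smooth_terms U"
| const: "(\<lambda>y. c) \<in> smooth_terms U"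
| inverse: "h \<in> smooth_terms U \<Longrightarrow> (\<forall>y\<in>U. h y \<noteq> 0) \<Longrightarrow> (\<lambda>y. inverse (h y)) \<in> smooth_terms U"
| cong: "h \<in> smooth_terms U \<Longrightarrow> (\<forall>y\<in>U. k y = h y) \<Longrightarrow> k \<in> smooth_terms U"

lemma smooth_terms_differentiable_continuous_on:
  assumes U: "open U" and "h \<in> smooth_terms U"
  shows "differentiable_continuous_on U h"
  using assms(2) unfolding differentiable_continuous_on_def
proof (induction rule: smooth_terms.induct)
  case (base h)
  then show ?case using smooth_on_continuous smooth_on_differentiable by blast
next
  case (cong h k)
  then show ?case
    by (auto intro: differentiable_cong_open[OF U] continuous_on_cong[THEN iffD1])
qed (auto intro!: continuous_on_add continuous_on_mult continuous_on_inverse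
       differentiable_add differentiable_mult differentiable_inverse)

lemma smooth_terms_has_pd:
  "open U \<Longrightarrow> h \<in> smooth_terms U \<Longrightarrow> y \<in> U \<Longrightarrow> has_pd i h y (pd i h y)"
  using smooth_terms_differentiable_continuous_on
  by (auto intro: has_pd_pd simp: differentiable_continuous_on_def)

lemma smooth_terms_pd:
  assumes U: "open U" and "h \<in> smooth_terms U"
  shows "pd i h \<in> smooth_terms U"
  using assms(2)
proof (induction rule: smooth_terms.induct)
  case (base h)
  then show ?case by (blast intro: smooth_terms.base smooth_on_pd)
next
  case (add h k)
  show ?case
    by (rule smooth_terms.cong[OF smooth_terms.add[OF add.IH]])
      (use add.hyps in \<open>auto intro!: pd_eqI has_pd_add smooth_terms_has_pd[OF U]\<close>)
next
  case (mult h k)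
  show ?case
    by (rule smooth_terms.cong[OF smooth_terms.add[OF smooth_terms.mult[OF mult.IH(1) mult.hyps(2)]
          smooth_terms.mult[OF mult.hyps(1) mult.IH(2)]]])
      (use mult.hyps in \<open>auto intro!: pd_eqI has_pd_mult smooth_terms_has_pd[OF U]\<close>)
next
  case (const c)
  have "pd i (\<lambda>y. c) = (\<lambda>y. 0)" by (simp add: fun_eq_iff pd_const)
  then show ?case by (simp add: smooth_terms.const)
next
  case (inverse h)
  have inv: "(\<lambda>y. inverse (h y)) \<in> smooth_terms U" by (rule smooth_terms.inverse[OF inverse.hyps])
  show ?case
    by (rule smooth_terms.cong[OF smooth_terms.mult[OF smooth_terms.const[of "-1"]
          smooth_terms.mult[OF inv smooth_terms.mult[OF inv inverse.IH]]]])
      (use inverse.hyps in \<open>auto intro!: pd_eqI has_pd_inverse smooth_terms_has_pd[OF U]\<close>)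
next
  case (cong h k)
  then show ?case using pd_cong_open[OF U, of _ k h i] by (blast intro: smooth_terms.cong)
qed

lemma smooth_terms_smooth_on: "open U \<Longrightarrow> h \<in> smooth_terms U \<Longrightarrow> smooth_on U h"
  by (rule smooth_on_coinduct[where P="\<lambda>h. h \<in> smooth_terms U"])
    (auto intro: smooth_terms_differentiable_continuous_on smooth_terms_pd)

lemma smooth_on_add: "open U \<Longrightarrow> smooth_on U h \<Longrightarrow> smooth_on U k \<Longrightarrow> smooth_on U (\<lambda>y. h y + k y)"
  by (blast intro: smooth_terms_smooth_on smooth_terms.intros)

lemma smooth_on_mult: "open U \<Longrightarrow> smooth_on U h \<Longrightarrow> smooth_on U k \<Longrightarrow> smooth_on U (\<lambda>y. h y * k y)"
  by (blast intro: smooth_terms_smooth_on smooth_terms.intros)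

lemma smooth_on_const: "open U \<Longrightarrow> smooth_on U (\<lambda>y. c)"
  by (blast intro: smooth_terms_smooth_on smooth_terms.intros)

lemma smooth_on_inverse: "open U \<Longrightarrow> smooth_on U h \<Longrightarrow> (\<forall>y\<in>U. h y \<noteq> 0) \<Longrightarrow> smooth_on U (\<lambda>y. inverse (h y))"
  by (blast intro: smooth_terms_smooth_on smooth_terms.intros)

lemma smooth_on_cong: "open U \<Longrightarrow> smooth_on U h \<Longrightarrow> (\<forall>y\<in>U. k y = h y) \<Longrightarrow> smooth_on U k"
  by (blast intro: smooth_terms_smooth_on smooth_terms.intros)

lemma smooth_on_diff: "open U \<Longrightarrow> smooth_on U h \<Longrightarrow> smooth_on U k \<Longrightarrow> smooth_on U (\<lambda>y. h y - k y)"
proof -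
  assume a: "open U" "smooth_on U h" "smooth_on U k"
  have "smooth_on U (\<lambda>y. h y + (\<lambda>y. -1) y * k y)"
    using a by (intro smooth_on_add smooth_on_mult smooth_on_const)
  then show ?thesis by simp
qed

lemma smooth_on_cmult: "open U \<Longrightarrow> smooth_on U h \<Longrightarrow> smooth_on U (\<lambda>y. c * h y)"
  using smooth_on_mult[of U "\<lambda>y. c" h] smooth_on_const by blast

lemma smooth_on_divide: "open U \<Longrightarrow> smooth_on U h \<Longrightarrow> smooth_on U k \<Longrightarrow> (\<forall>y\<in>U. k y \<noteq> 0) \<Longrightarrow> smooth_on U (\<lambda>y. h y / k y)"
  using smooth_on_mult[OF _ _ smooth_on_inverse, of U h k] by (simp add: divide_inverse)

lemma smooth_on_sum:
  assumes "open U" "finite S" "\<And>a. a \<in> S \<Longrightarrow> smooth_on U (F a)"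
  shows "smooth_on U (\<lambda>y. \<Sum>a\<in>S. F a y)"
  using assms(2,3)
proof (induction S rule: finite_induct)
  case empty then show ?case using smooth_on_const[OF assms(1)] by simp
next
  case (insert a S) then show ?case by (simp add: smooth_on_add assms(1))
qed

lemma pd_mult: "smooth_on U A \<Longrightarrow> smooth_on U B \<Longrightarrow> y \<in> U \<Longrightarrow>
   pd i (\<lambda>y. A y * B y) y = pd i A y * B y + A y * pd i B y"
  by (intro pd_eqI has_pd_mult smooth_on_has_pd)

lemma pd_add: "smooth_on U A \<Longrightarrow> smooth_on U B \<Longrightarrow> y \<in> U \<Longrightarrow>
   pd i (\<lambda>y. A y + B y) y = pd i A y + pd i B y"
  by (intro pd_eqI has_pd_add smooth_on_has_pd)

lemma pd_diff: "smooth_on U A \<Longrightarrow> smooth_on U B \<Longrightarrow> y \<in> U \<Longrightarrow>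
   pd i (\<lambda>y. A y - B y) y = pd i A y - pd i B y"
  by (intro pd_eqI has_pd_diff smooth_on_has_pd)

lemma pd_cmult: assumes "smooth_on U A" "y \<in> U" shows "pd i (\<lambda>y. c * A y) y = c * pd i A y"
proof -
  have "has_pd i (\<lambda>z. c * A z) y (0 * A y + c * pd i A y)"
    by (rule has_pd_mult[OF has_pd_const smooth_on_has_pd[OF assms]])
  then show ?thesis by (auto dest: pd_eqI)
qed

lemma pd_sum: "finite S \<Longrightarrow> (\<And>a. a \<in> S \<Longrightarrow> smooth_on U (F a)) \<Longrightarrow> y \<in> U \<Longrightarrow>
   pd i (\<lambda>y. \<Sum>a\<in>S. F a y) y = (\<Sum>a\<in>S. pd i (F a) y)"
  by (intro pd_eqI has_pd_sum smooth_on_has_pd) auto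

lemma pd_sum_mult:
  assumes "\<And>l. smooth_on U (A l)" "\<And>l. smooth_on U (B l)" "x \<in> U" "open U"
  shows "pd p (\<lambda>y. \<Sum>l\<in>UNIV. A l y * B l y) x = (\<Sum>l\<in>(UNIV::idx set). pd p (A l) x * B l x + A l x * pd p (B l) x)"
proof -
  have "pd p (\<lambda>y. \<Sum>l\<in>UNIV. A l y * B l y) x = (\<Sum>l\<in>(UNIV::idx set). pd p (\<lambda>y. A l y * B l y) x)"
    by (rule pd_sum[OF _ _ assms(3)]) (auto intro: smooth_on_mult assms)
  also have "\<dots> = (\<Sum>l\<in>(UNIV::idx set). pd p (A l) x * B l x + A l x * pd p (B l) x)"
    by (rule sum.cong[OF refl], rule pd_mult[OF assms(1,2,3)])
  finally show ?thesis .
qed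

lemma pd_sum2_mult:
  assumes "\<And>k j. smooth_on U (A k j)" "\<And>k j. smooth_on U (B k j)" "x \<in> U" "open U"
  shows "pd p (\<lambda>y. \<Sum>k\<in>UNIV. \<Sum>j\<in>UNIV. A k j y * B k j y) x
     = (\<Sum>k\<in>(UNIV::idx set). \<Sum>j\<in>(UNIV::idx set). pd p (A k j) x * B k j x + A k j x * pd p (B k j) x)"
proof -
  have sm: "smooth_on U (\<lambda>y. \<Sum>j\<in>UNIV. A k j y * B k j y)" for k
    by (intro smooth_on_sum smooth_on_mult assms finite)
  have "pd p (\<lambda>y. \<Sum>k\<in>UNIV. \<Sum>j\<in>UNIV. A k j y * B k j y) x = (\<Sum>k\<in>(UNIV::idx set). pd p (\<lambda>y. \<Sum>j\<in>UNIV. A k j y * B k j y) x)"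
    by (rule pd_sum[OF _ _ assms(3)]) (auto intro: sm)
  also have "\<dots> = (\<Sum>k\<in>(UNIV::idx set). \<Sum>j\<in>(UNIV::idx set). pd p (A k j) x * B k j x + A k j x * pd p (B k j) x)"
    by (rule sum.cong[OF refl], rule pd_sum_mult[OF assms])
  finally show ?thesis .
qed

section \<open>Symmetry of second partial derivatives\<close>

lemma dist_axis_sum_less:
  fixes a b :: real and y :: pt
  assumes "\<bar>a\<bar> \<le> t" "\<bar>b\<bar> \<le> t" "2 * t < d"
  shows "dist (y + a *\<^sub>R axis i 1 + b *\<^sub>R axis j 1) y < d"
proof -
  have "norm (a *\<^sub>R axis i (1::real) + b *\<^sub>R axis j 1 :: pt) \<le> \<bar>a\<bar> + \<bar>b\<bar>"
    by (rule order_trans[OF norm_triangle_ineq]) simp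
  then show ?thesis using assms by (simp add: dist_norm algebra_simps)
qed

lemma second_difference_mean_value:
  assumes sh: "smooth_on U h" and bl: "ball y d \<subseteq> U" and t: "0 < t" "2 * t < d"
  shows "\<exists>\<xi> \<eta>. 0 < \<xi> \<and> \<xi> < t \<and> 0 < \<eta> \<and> \<eta> < t \<and>
    h (y + t *\<^sub>R axis i 1 + t *\<^sub>R axis j 1) - h (y + t *\<^sub>R axis i 1) - h (y + t *\<^sub>R axis j 1) + h y
      = t * t * pd j (pd i h) (y + \<xi> *\<^sub>R axis i 1 + \<eta> *\<^sub>R axis j 1)"
proof -
  let ?ei = "axis i (1::real) :: pt" and ?ej = "axis j (1::real) :: pt"
  have inU: "y + a *\<^sub>R ?ei + b *\<^sub>R ?ej \<in> U" if "0 \<le> a" "a \<le> t" "0 \<le> b" "b \<le> t" for a b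
    using bl dist_axis_sum_less[of a t b d y i j] that t by (auto simp: dist_commute)
  have dh: "h differentiable (at z)" "pd i h differentiable (at z)" if "z \<in> U" for z
    using that sh smooth_on_pd[OF sh] by (auto intro: smooth_on_differentiable)
  define a where "a s = h (y + t *\<^sub>R ?ej + s *\<^sub>R ?ei) - h (y + s *\<^sub>R ?ei)" for s
  define a' where "a' s = pd i h (y + t *\<^sub>R ?ej + s *\<^sub>R ?ei) - pd i h (y + s *\<^sub>R ?ei)" for s
  have "DERIV a s :> a' s" if "0 \<le> s" "s \<le> t" for s
    unfolding a_def a'_def using inU[of s t] inU[of s 0] that t
    by (intro DERIV_diff has_real_derivative_pd_along_axis dh) (simp_all add: algebra_simps)
  then obtain \<xi> where xi: "0 < \<xi>" "\<xi> < t" and eqa: "a t - a 0 = t * a' \<xi>"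
    using MVT2[OF t(1), of a a'] by auto
  define b where "b s = pd i h (y + \<xi> *\<^sub>R ?ei + s *\<^sub>R ?ej)" for s
  have "DERIV b s :> pd j (pd i h) (y + \<xi> *\<^sub>R ?ei + s *\<^sub>R ?ej)" if "0 \<le> s" "s \<le> t" for s
    unfolding b_def using inU[of \<xi> s] that xi by (intro has_real_derivative_pd_along_axis dh) simp
  then obtain \<eta> where eta: "0 < \<eta>" "\<eta> < t"
    and eqb: "b t - b 0 = t * pd j (pd i h) (y + \<xi> *\<^sub>R ?ei + \<eta> *\<^sub>R ?ej)"
    using MVT2[OF t(1), of b "\<lambda>s. pd j (pd i h) (y + \<xi> *\<^sub>R ?ei + s *\<^sub>R ?ej)"] by auto
  have "a' \<xi> = b t - b 0" unfolding a'_def b_def by (simp add: algebra_simps)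
  moreover have "a t - a 0 = h (y + t *\<^sub>R ?ei + t *\<^sub>R ?ej) - h (y + t *\<^sub>R ?ei) - h (y + t *\<^sub>R ?ej) + h y"
    unfolding a_def by (simp add: algebra_simps)
  ultimately show ?thesis using xi eta eqa eqb by (intro exI[of _ \<xi>] exI[of _ \<eta>]) (simp add: mult.assoc)
qed

text \<open>Schwarz's theorem, via the two mean-value expressions of the same second difference
  and continuity of both mixed partials.\<close>

lemma pd_commute:
  assumes U: "open U" and sh: "smooth_on U h" and y: "y \<in> U"
  shows "pd i (pd j h) y = pd j (pd i h) y"
proof (rule ccontr)
  let ?F = "pd j (pd i h)" and ?G = "pd i (pd j h)"
  assume ne: "?G y \<noteq> ?F y"
  define e where "e = \<bar>?F y - ?G y\<bar> / 2"
  have e: "e > 0" using ne by (simp add: e_def)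
  obtain d where d: "d > 0" "ball y d \<subseteq> U" using U y open_contains_ball by blast
  have "isCont ?F y" "isCont ?G y"
    using smooth_on_continuous[OF smooth_on_pd[OF smooth_on_pd[OF sh]]] U y
      continuous_on_eq_continuous_at by blast+
  then obtain dF dG where dF: "dF > 0" "\<And>z. dist z y < dF \<Longrightarrow> dist (?F z) (?F y) < e"
    and dG: "dG > 0" "\<And>z. dist z y < dG \<Longrightarrow> dist (?G z) (?G y) < e"
    using e unfolding continuous_at_eps_delta by (metis (no_types))
  define t where "t = min d (min dF dG) / 4"
  have t: "0 < t" "2 * t < d" "2 * t < dF" "2 * t < dG" using d dF dG by (auto simp: t_def)
  obtain \<xi> \<eta> where xe: "0 < \<xi>" "\<xi> < t" "0 < \<eta>" "\<eta> < t"
    and e1: "h (y + t *\<^sub>R axis i 1 + t *\<^sub>R axis j 1) - h (y + t *\<^sub>R axis i 1) - h (y + t *\<^sub>R axis j 1) + h y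
      = t * t * ?F (y + \<xi> *\<^sub>R axis i 1 + \<eta> *\<^sub>R axis j 1)"
    using second_difference_mean_value[OF sh d(2) t(1,2), of i j] by blast
  obtain \<xi>' \<eta>' where xe': "0 < \<xi>'" "\<xi>' < t" "0 < \<eta>'" "\<eta>' < t"
    and e2: "h (y + t *\<^sub>R axis j 1 + t *\<^sub>R axis i 1) - h (y + t *\<^sub>R axis j 1) - h (y + t *\<^sub>R axis i 1) + h y
      = t * t * ?G (y + \<xi>' *\<^sub>R axis j 1 + \<eta>' *\<^sub>R axis i 1)"
    using second_difference_mean_value[OF sh d(2) t(1,2), of j i] by blast
  have swap: "y + t *\<^sub>R axis j 1 + t *\<^sub>R axis i 1 = y + t *\<^sub>R axis i 1 + t *\<^sub>R axis j 1"
    by (simp add: algebra_simps)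
  have "t * t * ?F (y + \<xi> *\<^sub>R axis i 1 + \<eta> *\<^sub>R axis j 1) = t * t * ?G (y + \<xi>' *\<^sub>R axis j 1 + \<eta>' *\<^sub>R axis i 1)"
    using e1 e2 unfolding swap by linarith
  then have eq: "?F (y + \<xi> *\<^sub>R axis i 1 + \<eta> *\<^sub>R axis j 1) = ?G (y + \<xi>' *\<^sub>R axis j 1 + \<eta>' *\<^sub>R axis i 1)"
    using t(1) by simp
  have n1: "dist (y + \<xi> *\<^sub>R axis i 1 + \<eta> *\<^sub>R axis j 1) y < dF"
    and n2: "dist (y + \<xi>' *\<^sub>R axis j 1 + \<eta>' *\<^sub>R axis i 1) y < dG"
    using xe xe' t by (auto intro!: dist_axis_sum_less[where t=t])
  have "dist (?F y) (?G y) < e + e"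
    using dF(2)[OF n1] dG(2)[OF n2] eq by (smt (verit, best) dist_commute dist_triangle)
  then show False by (simp add: e_def dist_real_def)
qed

section \<open>Linear algebra in dimension three\<close>

lemma sum_idx_delta [simp]:
  "(\<Sum>m\<in>(UNIV::idx set). (if k = m then 1 else 0) * X m) = (X k :: real)"
  "(\<Sum>m\<in>(UNIV::idx set). X m * (if m = k then 1 else 0)) = (X k :: real)"
  "(\<Sum>m\<in>(UNIV::idx set). (if m = k then 1 else 0) * X m) = (X k :: real)"
  "(\<Sum>m\<in>(UNIV::idx set). X m * (if k = m then 1 else 0)) = (X k :: real)"
  using exhaust_3[of k] by (auto simp: sum_3)

lemma sum_inverse_contract:
  fixes A B :: "idx \<Rightarrow> idx \<Rightarrow> real"
  assumes "\<And>a c. (\<Sum>b\<in>UNIV. A a b * B b c) = (if a = c then 1 else 0)"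
  shows "(\<Sum>l\<in>UNIV. A k l * (\<Sum>m\<in>UNIV. B l m * X m)) = X k"
proof -
  have "(\<Sum>l\<in>UNIV. A k l * (\<Sum>m\<in>UNIV. B l m * X m)) = (\<Sum>l\<in>UNIV. \<Sum>m\<in>UNIV. A k l * B l m * X m)"
    by (simp add: sum_distrib_left mult.assoc)
  also have "\<dots> = (\<Sum>m\<in>UNIV. \<Sum>l\<in>UNIV. A k l * B l m * X m)" by (rule sum.swap)
  also have "\<dots> = (\<Sum>m\<in>UNIV. (\<Sum>l\<in>UNIV. A k l * B l m) * X m)" by (simp add: sum_distrib_right)
  also have "\<dots> = X k" using assms by simp
  finally show ?thesis .
qed

lemma solve_by_inverse:
  fixes A K :: "idx \<Rightarrow> real" and G H :: "idx \<Rightarrow> idx \<Rightarrow> real"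
  assumes GH: "\<And>b d. (\<Sum>c\<in>UNIV. G b c * H c d) = (if b = d then 1 else 0)"
    and AK: "\<And>c. (\<Sum>b\<in>UNIV. A b * G b c) = K c"
  shows "A d = (\<Sum>c\<in>UNIV. K c * H c d)"
proof -
  have "(\<Sum>c\<in>UNIV. K c * H c d) = (\<Sum>c\<in>UNIV. (\<Sum>b\<in>UNIV. A b * G b c) * H c d)" using AK by simp
  also have "\<dots> = (\<Sum>c\<in>UNIV. \<Sum>b\<in>UNIV. A b * (G b c * H c d))"
    by (simp add: sum_distrib_right mult.assoc)
  also have "\<dots> = (\<Sum>b\<in>UNIV. \<Sum>c\<in>UNIV. A b * (G b c * H c d))" by (rule sum.swap)
  also have "\<dots> = (\<Sum>b\<in>UNIV. A b * (\<Sum>c\<in>UNIV. G b c * H c d))" by (simp add: sum_distrib_left)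
  also have "\<dots> = A d" using GH by simp
  finally show ?thesis by simp
qed

lemma sum_inverse_contract_right:
  fixes X :: "idx \<Rightarrow> real" and G H :: "idx \<Rightarrow> idx \<Rightarrow> real"
  assumes GH: "\<And>b d. (\<Sum>c\<in>UNIV. G b c * H c d) = (if b = d then 1 else 0)"
  shows "(\<Sum>c\<in>UNIV. (\<Sum>b\<in>UNIV. X b * G b c) * H c d) = X d"
  using solve_by_inverse[OF GH, of X "\<lambda>c. \<Sum>b\<in>UNIV. X b * G b c" d] by simp

text \<open>Arithmetic on type \<open>3\<close> is modulo 3, so \<open>b = a + 1\<close> singles out the cyclic
  permutations of \<open>(1, 2, 3)\<close>.\<close>

definition levi_civita :: "3 \<Rightarrow> 3 \<Rightarrow> 3 \<Rightarrow> real" where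
 "levi_civita a b c = (if a = b \<or> b = c \<or> a = c then 0 else if b = a + 1 then 1 else -1)"

definition succ3 :: "3 \<Rightarrow> 3" where "succ3 a = (if a = 1 then 2 else if a = 2 then 3 else 1)"

definition adj3 :: "(3 \<Rightarrow> 3 \<Rightarrow> real) \<Rightarrow> 3 \<Rightarrow> 3 \<Rightarrow> real" where
 "adj3 g a b = g (succ3 a) (succ3 b) * g (succ3 (succ3 a)) (succ3 (succ3 b)) - g (succ3 a) (succ3 (succ3 b)) * g (succ3 (succ3 a)) (succ3 b)"

definition det3 :: "(3 \<Rightarrow> 3 \<Rightarrow> real) \<Rightarrow> real" where
 "det3 g = (\<Sum>b\<in>UNIV. g 1 b * adj3 g 1 b)"

definition eps_tensor :: "(3 \<Rightarrow> 3 \<Rightarrow> real) \<Rightarrow> 3 \<Rightarrow> 3 \<Rightarrow> 3 \<Rightarrow> 3 \<Rightarrow> real" where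
 "eps_tensor M l k i j = (\<Sum>a\<in>UNIV. \<Sum>b\<in>UNIV. levi_civita l k a * levi_civita i j b * M a b)"

definition ricci_contract :: "(3 \<Rightarrow> 3 \<Rightarrow> real) \<Rightarrow> (3 \<Rightarrow> 3 \<Rightarrow> 3 \<Rightarrow> 3 \<Rightarrow> real) \<Rightarrow> 3 \<Rightarrow> 3 \<Rightarrow> real" where
 "ricci_contract H W k j = (\<Sum>l\<in>UNIV. \<Sum>i\<in>UNIV. H l i * W l k i j)"

definition full_contract :: "(3 \<Rightarrow> 3 \<Rightarrow> real) \<Rightarrow> (3 \<Rightarrow> 3 \<Rightarrow> real) \<Rightarrow> real" where
 "full_contract H T = (\<Sum>k\<in>UNIV. \<Sum>j\<in>UNIV. H k j * T k j)"

lemma adj3_vals: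
  "adj3 g 1 1 = g 2 2 * g 3 3 - g 2 3 * g 3 2"
  "adj3 g 1 2 = g 2 3 * g 3 1 - g 2 1 * g 3 3"
  "adj3 g 1 3 = g 2 1 * g 3 2 - g 2 2 * g 3 1"
  "adj3 g 2 1 = g 3 2 * g 1 3 - g 3 3 * g 1 2"
  "adj3 g 2 2 = g 3 3 * g 1 1 - g 3 1 * g 1 3"
  "adj3 g 2 3 = g 3 1 * g 1 2 - g 3 2 * g 1 1"
  "adj3 g 3 1 = g 1 2 * g 2 3 - g 1 3 * g 2 2"
  "adj3 g 3 2 = g 1 3 * g 2 1 - g 1 1 * g 2 3"
  "adj3 g 3 3 = g 1 1 * g 2 2 - g 1 2 * g 2 1"
  by (simp_all add: adj3_def succ3_def)

lemma det3_expand: "det3 g = g 1 1 * (g 2 2 * g 3 3 - g 2 3 * g 3 2) + g 1 2 * (g 2 3 * g 3 1 - g 2 1 * g 3 3) + g 1 3 * (g 2 1 * g 3 2 - g 2 2 * g 3 1)"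
  by (simp add: sum_3 adj3_def succ3_def det3_def)

lemma eps_tensor_ricci_decomp:
  assumes gs: "\<And>a b. g a b = g b a" and Ms: "\<And>a b. M a b = M b a"
  shows "det3 g * det3 g * eps_tensor M l k i j * 2 =
     2 * det3 g * (ricci_contract (adj3 g) (eps_tensor M) l i * g k j - ricci_contract (adj3 g) (eps_tensor M) l j * g k i
        + ricci_contract (adj3 g) (eps_tensor M) k j * g l i - ricci_contract (adj3 g) (eps_tensor M) k i * g l j)
     - full_contract (adj3 g) (ricci_contract (adj3 g) (eps_tensor M)) * (g l i * g k j - g l j * g k i)"
proof -
  have s: "g 2 1 = g 1 2" "g 3 1 = g 1 3" "g 3 2 = g 2 3" "M 2 1 = M 1 2" "M 3 1 = M 1 3" "M 3 2 = M 2 3"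
    using gs Ms by blast+
  have "\<forall>l k i j. det3 g * det3 g * eps_tensor M l k i j * 2 =
     2 * det3 g * (ricci_contract (adj3 g) (eps_tensor M) l i * g k j - ricci_contract (adj3 g) (eps_tensor M) l j * g k i
        + ricci_contract (adj3 g) (eps_tensor M) k j * g l i - ricci_contract (adj3 g) (eps_tensor M) k i * g l j)
     - full_contract (adj3 g) (ricci_contract (adj3 g) (eps_tensor M)) * (g l i * g k j - g l j * g k i)"
    unfolding forall_3
    by (intro conjI; simp add: sum_3 levi_civita_def adj3_vals det3_expand eps_tensor_def ricci_contract_def
        full_contract_def s; algebra)
  then show ?thesis by blast
qed

lemma adj3_sym: assumes gs: "\<And>a b. g a b = g b a" shows "adj3 g a b = adj3 g b a"
proof -
  have s: "g 2 1 = g 1 2" "g 3 1 = g 1 3" "g 3 2 = g 2 3" using gs by blast+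
  have "\<forall>a b. adj3 g a b = adj3 g b a" unfolding forall_3 by (simp add: adj3_vals s algebra_simps)
  then show ?thesis by blast
qed

lemma adj3_row_expansion: "(\<Sum>b\<in>UNIV. g c b * adj3 g a b) = (if a = c then det3 g else 0)"
proof -
  have "\<forall>a c. (\<Sum>b\<in>UNIV. g c b * adj3 g a b) = (if a = c then det3 g else 0)"
    unfolding forall_3 by (simp add: sum_3 adj3_vals det3_expand algebra_simps)
  then show ?thesis by blast
qed

lemma adj3_col_expansion: "(\<Sum>b\<in>UNIV. g b c * adj3 g b a) = (if a = c then det3 g else 0)"
proof -
  have "\<forall>a c. (\<Sum>b\<in>UNIV. g b c * adj3 g b a) = (if a = c then det3 g else 0)"
    unfolding forall_3 by (simp add: sum_3 adj3_vals det3_expand algebra_simps)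
  then show ?thesis by blast
qed

lemma curvature_pair_sym:
  fixes R :: "'a \<Rightarrow> 'a \<Rightarrow> 'a \<Rightarrow> 'a \<Rightarrow> real"
  assumes a1: "\<And>l k i j. R l k i j = - R k l i j" and a2: "\<And>l k i j. R l k i j = - R l k j i"
    and b1: "\<And>l k i j. R l k i j + R l i j k + R l j k i = 0"
  shows "R l k i j = R i j l k"
  using b1[of l k i j] b1[of k i j l] b1[of i j l k] b1[of j l k i]
    a1[of l k i j] a1[of l i j k] a1[of l j k i] a1[of k i j l] a1[of k j l i] a1[of k l i j]
    a1[of i j l k] a1[of i l k j] a1[of i k j l] a1[of j l k i] a1[of j k i l] a1[of j i l k]
    a2[of l k i j] a2[of l i j k] a2[of l j k i] a2[of k i j l] a2[of k j l i] a2[of k l i j]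
    a2[of i j l k] a2[of i l k j] a2[of i k j l] a2[of j l k i] a2[of j k i l] a2[of j i l k]
  by linarith

text \<open>An algebraic curvature tensor in dimension three equals \<open>eps_tensor M\<close> with
  \<open>M a b = R (a+1) (a+2) (b+1) (b+2)\<close>; this is what makes it a function of its Ricci contraction.\<close>

lemma curvature_tensor_3d_decomp:
  fixes g h :: "3 \<Rightarrow> 3 \<Rightarrow> real" and R :: "3 \<Rightarrow> 3 \<Rightarrow> 3 \<Rightarrow> 3 \<Rightarrow> real"
  assumes gs: "\<And>a b. g a b = g b a" and hdef: "\<And>a b. h a b = adj3 g a b / det3 g"
    and dn: "det3 g \<noteq> 0"
    and a1: "\<And>l k i j. R l k i j = - R k l i j" and a2: "\<And>l k i j. R l k i j = - R l k j i"
    and b1: "\<And>l k i j. R l k i j + R l i j k + R l j k i = 0"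
  defines "Ric \<equiv> \<lambda>k j. \<Sum>l\<in>UNIV. \<Sum>i\<in>UNIV. h l i * R l k i j"
  defines "s \<equiv> \<Sum>k\<in>UNIV. \<Sum>j\<in>UNIV. h k j * Ric k j"
  shows "R l k i j = Ric l i * g k j - Ric l j * g k i + Ric k j * g l i - Ric k i * g l j
      - s / 2 * (g l i * g k j - g l j * g k i)"
proof -
  define M where "M a b = R (succ3 a) (succ3 (succ3 a)) (succ3 b) (succ3 (succ3 b))" for a b
  have z1: "R l l i j = 0" for l i j using a1[of l l i j] by simp
  have z2: "R l k i i = 0" for l k i using a2[of l k i i] by simp
  have "\<forall>l k i j. R l k i j = eps_tensor M l k i j"
    unfolding forall_3
    by (intro conjI; simp add: eps_tensor_def sum_3 levi_civita_def M_def succ3_def z1 z2;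
        (metis a1 a2 minus_minus)?)
  then have RW: "R l k i j = eps_tensor M l k i j" for l k i j by blast
  have Ms: "M a b = M b a" for a b unfolding M_def by (rule curvature_pair_sym[OF a1 a2 b1])
  let ?D = "det3 g"
  let ?T = "ricci_contract (adj3 g) (eps_tensor M)"
  let ?S = "full_contract (adj3 g) ?T"
  have Ric: "Ric k j = ?T k j / ?D" for k j
    unfolding Ric_def ricci_contract_def hdef RW by (simp add: sum_divide_distrib)
  have s: "s = ?S / (?D * ?D)"
    unfolding s_def full_contract_def hdef Ric by (simp add: sum_divide_distrib)
  have P: "?D * ?D * eps_tensor M l k i j * 2 =
     2 * ?D * (?T l i * g k j - ?T l j * g k i + ?T k j * g l i - ?T k i * g l j)
     - ?S * (g l i * g k j - g l j * g k i)"
    by (rule eps_tensor_ricci_decomp[OF gs Ms])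
  show ?thesis unfolding Ric s RW[of l k i j]
    using P dn by (simp add: field_simps) algebra
qed

section \<open>Curvature identities as polynomial identities\<close>

text \<open>Here \<open>G\<close>, \<open>dG\<close> and \<open>ddG\<close> stand for the Christoffel symbols \<open>\<Gamma>\<^sup>m\<^sub>i\<^sub>j\<close> at one point and their
  partial derivatives \<open>dG n m i j = \<partial>\<^sub>n\<Gamma>\<^sup>m\<^sub>i\<^sub>j\<close>, \<open>ddG n i m j k = \<partial>\<^sub>n\<partial>\<^sub>i\<Gamma>\<^sup>m\<^sub>j\<^sub>k\<close>; the
  Bianchi and Ricci identities become polynomial identities in these symbols.\<close>

definition riem_expr :: "(idx \<Rightarrow> idx \<Rightarrow> idx \<Rightarrow> real) \<Rightarrow> (idx \<Rightarrow> idx \<Rightarrow> idx \<Rightarrow> idx \<Rightarrow> real) \<Rightarrow> idx \<Rightarrow> idx \<Rightarrow> idx \<Rightarrow> idx \<Rightarrow> real" where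
  "riem_expr G dG m k i j = dG i m j k - dG j m i k + (\<Sum>p\<in>UNIV. G m i p * G p j k) - (\<Sum>p\<in>UNIV. G m j p * G p i k)"

definition d_riem_expr :: "(idx \<Rightarrow> idx \<Rightarrow> idx \<Rightarrow> real) \<Rightarrow> (idx \<Rightarrow> idx \<Rightarrow> idx \<Rightarrow> idx \<Rightarrow> real) \<Rightarrow> (idx \<Rightarrow> idx \<Rightarrow> idx \<Rightarrow> idx \<Rightarrow> idx \<Rightarrow> real) \<Rightarrow> idx \<Rightarrow> idx \<Rightarrow> idx \<Rightarrow> idx \<Rightarrow> idx \<Rightarrow> real" where
  "d_riem_expr G dG ddG n m k i j = ddG n i m j k - ddG n j m i k
     + (\<Sum>p\<in>UNIV. dG n m i p * G p j k + G m i p * dG n p j k)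
     - (\<Sum>p\<in>UNIV. dG n m j p * G p i k + G m j p * dG n p i k)"

definition cov_deriv4 :: "(idx \<Rightarrow> idx \<Rightarrow> idx \<Rightarrow> real) \<Rightarrow> (idx \<Rightarrow> idx \<Rightarrow> idx \<Rightarrow> idx \<Rightarrow> real) \<Rightarrow> (idx \<Rightarrow> idx \<Rightarrow> idx \<Rightarrow> idx \<Rightarrow> idx \<Rightarrow> real) \<Rightarrow> idx \<Rightarrow> idx \<Rightarrow> idx \<Rightarrow> idx \<Rightarrow> idx \<Rightarrow> real" where
  "cov_deriv4 G R D n m k i j = D n m k i j
     + (\<Sum>p\<in>UNIV. G m n p * R p k i j) - (\<Sum>p\<in>UNIV. G p n k * R m p i j)
     - (\<Sum>p\<in>UNIV. G p n i * R m k p j) - (\<Sum>p\<in>UNIV. G p n j * R m k i p)"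

definition cov_d_riem_expr :: "(idx \<Rightarrow> idx \<Rightarrow> idx \<Rightarrow> real) \<Rightarrow> (idx \<Rightarrow> idx \<Rightarrow> idx \<Rightarrow> idx \<Rightarrow> real) \<Rightarrow> (idx \<Rightarrow> idx \<Rightarrow> idx \<Rightarrow> idx \<Rightarrow> idx \<Rightarrow> real) \<Rightarrow> idx \<Rightarrow> idx \<Rightarrow> idx \<Rightarrow> idx \<Rightarrow> idx \<Rightarrow> real" where
  "cov_d_riem_expr G dG ddG = cov_deriv4 G (riem_expr G dG) (d_riem_expr G dG ddG)"

lemma first_bianchi_expr:
  assumes Gs: "\<And>m i j. G m i j = G m j i" and dGs: "\<And>n m i j. dG n m i j = dG n m j i"
  shows "riem_expr G dG m k i j + riem_expr G dG m i j k + riem_expr G dG m j k i = 0"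
  unfolding riem_expr_def
  by (simp add: sum_3 Gs dGs)

lemma second_bianchi_expr:
  assumes Gs: "\<And>m i j. G m i j = G m j i" and dGs: "\<And>n m i j. dG n m i j = dG n m j i"
    and ddGs: "\<And>n i m j k. ddG n i m j k = ddG i n m j k"
  shows "cov_d_riem_expr G dG ddG n m k i j + cov_d_riem_expr G dG ddG i m k j n + cov_d_riem_expr G dG ddG j m k n i = 0"
  unfolding cov_d_riem_expr_def cov_deriv4_def d_riem_expr_def riem_expr_def
  by (simp add: sum_3 Gs dGs ddGs) algebra

lemma cov_d_riem_expr_antisym:
  "cov_d_riem_expr G dG ddG n m k i j = - cov_d_riem_expr G dG ddG n m k j i"
  unfolding cov_d_riem_expr_def cov_deriv4_def d_riem_expr_def riem_expr_def
  by (simp add: sum_3) algebra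

lemma cov_d_riem_expr_trace:
  assumes Gs: "\<And>m i j. G m i j = G m j i"
  shows "(\<Sum>m\<in>UNIV. cov_d_riem_expr G dG ddG n m k m j) = (\<Sum>m\<in>UNIV. d_riem_expr G dG ddG n m k m j)
     - (\<Sum>l\<in>UNIV. G l n k * (\<Sum>m\<in>UNIV. riem_expr G dG m l m j) + G l n j * (\<Sum>m\<in>UNIV. riem_expr G dG m k m l))"
  unfolding cov_d_riem_expr_def cov_deriv4_def
  by (simp add: sum_3 Gs) algebra

lemma trace_cov_deriv_expr:
  fixes h ric :: "idx \<Rightarrow> idx \<Rightarrow> real" and dric dh G :: "idx \<Rightarrow> idx \<Rightarrow> idx \<Rightarrow> real"
  assumes dh: "\<And>n a b. dh n a b = - (\<Sum>c\<in>UNIV. G a n c * h c b) - (\<Sum>c\<in>UNIV. G b n c * h a c)"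
  shows "(\<Sum>k\<in>UNIV. \<Sum>j\<in>UNIV. h k j * (dric n k j - (\<Sum>l\<in>UNIV. G l n k * ric l j + G l n j * ric k l)))
     = (\<Sum>k\<in>UNIV. \<Sum>j\<in>UNIV. dh n k j * ric k j + h k j * dric n k j)"
  unfolding dh
  by (simp add: sum_3) algebra

lemma double_trace_cov_deriv4:
  fixes h ric :: "idx \<Rightarrow> idx \<Rightarrow> real" and dric dh G :: "idx \<Rightarrow> idx \<Rightarrow> idx \<Rightarrow> real"
    and R :: "idx \<Rightarrow> idx \<Rightarrow> idx \<Rightarrow> idx \<Rightarrow> real" and D :: "idx \<Rightarrow> idx \<Rightarrow> idx \<Rightarrow> idx \<Rightarrow> idx \<Rightarrow> real"
  assumes Gs: "\<And>m i j. G m i j = G m j i" and hs: "\<And>a b. h a b = h b a"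
    and dh: "\<And>n a b. dh n a b = - (\<Sum>c\<in>UNIV. G a n c * h c b) - (\<Sum>c\<in>UNIV. G b n c * h a c)"
    and Q: "\<And>m n. (\<Sum>k\<in>UNIV. \<Sum>j\<in>UNIV. h k j * R m k j n) = - (\<Sum>l\<in>UNIV. h m l * ric l n)"
    and dQ: "\<And>p m n. (\<Sum>k\<in>UNIV. \<Sum>j\<in>UNIV. dh p k j * R m k j n + h k j * D p m k j n)
        = - (\<Sum>l\<in>UNIV. dh p m l * ric l n + h m l * dric p l n)"
  shows "(\<Sum>k\<in>UNIV. \<Sum>j\<in>UNIV. h k j * (\<Sum>m\<in>UNIV. cov_deriv4 G R D m m k j n))
     = - (\<Sum>k\<in>UNIV. \<Sum>j\<in>UNIV. h k j * (dric j k n - (\<Sum>l\<in>UNIV. G l j k * ric l n + G l j n * ric k l)))"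
proof -
  have s1: "(\<Sum>k\<in>UNIV. \<Sum>j\<in>UNIV. h k j * (\<Sum>m\<in>UNIV. cov_deriv4 G R D m m k j n))
     = (\<Sum>m\<in>UNIV. (\<Sum>k\<in>UNIV. \<Sum>j\<in>UNIV. h k j * D m m k j n))
       + (\<Sum>m\<in>UNIV. \<Sum>p\<in>UNIV. G m m p * (\<Sum>k\<in>UNIV. \<Sum>j\<in>UNIV. h k j * R p k j n))
       - (\<Sum>m\<in>UNIV. \<Sum>k\<in>UNIV. \<Sum>j\<in>UNIV. \<Sum>p\<in>UNIV. h k j * G p m k * R m p j n)
       - (\<Sum>m\<in>UNIV. \<Sum>k\<in>UNIV. \<Sum>j\<in>UNIV. \<Sum>p\<in>UNIV. h k j * G p m j * R m k p n)
       - (\<Sum>m\<in>UNIV. \<Sum>p\<in>UNIV. G p m n * (\<Sum>k\<in>UNIV. \<Sum>j\<in>UNIV. h k j * R m k j p))"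
    unfolding cov_deriv4_def by (simp add: sum_3; algebra)
  have dQ': "(\<Sum>k\<in>UNIV. \<Sum>j\<in>UNIV. h k j * D m m k j n)
     = - (\<Sum>l\<in>UNIV. dh m m l * ric l n + h m l * dric m l n) - (\<Sum>k\<in>UNIV. \<Sum>j\<in>UNIV. dh m k j * R m k j n)" for m
    using dQ[of m m n] by (simp add: sum.distrib algebra_simps)
  show ?thesis unfolding s1 dQ' Q unfolding dh
    by (simp add: sum_3 Gs hs; algebra)
qed

lemma contracted_bianchi_expr:
  fixes h :: "idx \<Rightarrow> idx \<Rightarrow> real" and dh G :: "idx \<Rightarrow> idx \<Rightarrow> idx \<Rightarrow> real"
  assumes Gs: "\<And>m i j. G m i j = G m j i" and dGs: "\<And>n m i j. dG n m i j = dG n m j i"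
    and ddGs: "\<And>n i m j k. ddG n i m j k = ddG i n m j k"
    and hs: "\<And>a b. h a b = h b a"
    and dh: "\<And>n a b. dh n a b = - (\<Sum>c\<in>UNIV. G a n c * h c b) - (\<Sum>c\<in>UNIV. G b n c * h a c)"
    and Q: "\<And>m n. (\<Sum>k\<in>UNIV. \<Sum>j\<in>UNIV. h k j * riem_expr G dG m k j n) = - (\<Sum>l\<in>UNIV. h m l * ric l n)"
    and dQ: "\<And>p m n. (\<Sum>k\<in>UNIV. \<Sum>j\<in>UNIV. dh p k j * riem_expr G dG m k j n + h k j * d_riem_expr G dG ddG p m k j n)
        = - (\<Sum>l\<in>UNIV. dh p m l * ric l n + h m l * dric p l n)"
    and ric: "\<And>l n. ric l n = (\<Sum>q\<in>UNIV. riem_expr G dG q l q n)"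
    and dric: "\<And>p l n. dric p l n = (\<Sum>q\<in>UNIV. d_riem_expr G dG ddG p q l q n)"
  shows "(\<Sum>k\<in>UNIV. \<Sum>j\<in>UNIV. dh n k j * ric k j + h k j * dric n k j)
     = 2 * (\<Sum>k\<in>UNIV. \<Sum>j\<in>UNIV. h k j * (dric j k n - (\<Sum>l\<in>UNIV. G l j k * ric l n + G l j n * ric k l)))"
proof -
  define Dric where "Dric a b c = dric a b c - (\<Sum>l\<in>UNIV. G l a b * ric l c + G l a c * ric b l)" for a b c
  have tr: "(\<Sum>m\<in>UNIV. cov_d_riem_expr G dG ddG a m b m c) = Dric a b c" for a b c
    unfolding cov_d_riem_expr_trace[OF Gs] Dric_def ric dric ..
  have b: "Dric n k j + (\<Sum>m\<in>UNIV. cov_d_riem_expr G dG ddG m m k j n) - Dric j k n = 0" for k j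
  proof -
    have "(\<Sum>m\<in>UNIV. cov_d_riem_expr G dG ddG n m k m j + cov_d_riem_expr G dG ddG m m k j n + cov_d_riem_expr G dG ddG j m k n m) = 0"
      using second_bianchi_expr[OF Gs dGs ddGs] by simp
    moreover have "cov_d_riem_expr G dG ddG j m k n m = - cov_d_riem_expr G dG ddG j m k m n" for m by (rule cov_d_riem_expr_antisym)
    ultimately show ?thesis by (simp add: sum.distrib sum_subtractf tr)
  qed
  have a: "(\<Sum>k\<in>UNIV. \<Sum>j\<in>UNIV. h k j * Dric n k j) = (\<Sum>k\<in>UNIV. \<Sum>j\<in>UNIV. dh n k j * ric k j + h k j * dric n k j)"
    unfolding Dric_def by (rule trace_cov_deriv_expr[OF dh])
  have c: "(\<Sum>k\<in>UNIV. \<Sum>j\<in>UNIV. h k j * (\<Sum>m\<in>UNIV. cov_d_riem_expr G dG ddG m m k j n))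
      = - (\<Sum>k\<in>UNIV. \<Sum>j\<in>UNIV. h k j * Dric j k n)"
    unfolding cov_d_riem_expr_def Dric_def by (rule double_trace_cov_deriv4[OF Gs hs dh Q dQ])
  have "(\<Sum>k\<in>UNIV. \<Sum>j\<in>UNIV. h k j * (Dric n k j + (\<Sum>m\<in>UNIV. cov_d_riem_expr G dG ddG m m k j n) - Dric j k n)) = 0"
    using b by simp
  then have "(\<Sum>k\<in>UNIV. \<Sum>j\<in>UNIV. h k j * Dric n k j) + (\<Sum>k\<in>UNIV. \<Sum>j\<in>UNIV. h k j * (\<Sum>m\<in>UNIV. cov_d_riem_expr G dG ddG m m k j n))
     - (\<Sum>k\<in>UNIV. \<Sum>j\<in>UNIV. h k j * Dric j k n) = 0"
    by (simp add: algebra_simps sum.distrib sum_subtractf)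
  then have "(\<Sum>k\<in>UNIV. \<Sum>j\<in>UNIV. h k j * Dric n k j) = 2 * (\<Sum>k\<in>UNIV. \<Sum>j\<in>UNIV. h k j * Dric j k n)"
    unfolding c by simp
  then show ?thesis unfolding a by (simp add: Dric_def)
qed

lemma lowered_curvature_expr_antisym:
  fixes h :: "idx \<Rightarrow> idx \<Rightarrow> real" and Gl :: "idx \<Rightarrow> idx \<Rightarrow> idx \<Rightarrow> real" and ddg :: "idx \<Rightarrow> idx \<Rightarrow> idx \<Rightarrow> idx \<Rightarrow> real"
  assumes hs: "\<And>a b. h a b = h b a"
    and d1: "\<And>i j a b. ddg i j a b = ddg j i a b" and d2: "\<And>i j a b. ddg i j a b = ddg i j b a"
  shows "((ddg i j k l + ddg i k j l - ddg i l j k)/2 - (ddg j i k l + ddg j k i l - ddg j l i k)/2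
     - (\<Sum>m\<in>UNIV. \<Sum>n\<in>UNIV. Gl m i l * h m n * Gl n j k) + (\<Sum>m\<in>UNIV. \<Sum>n\<in>UNIV. Gl m j l * h m n * Gl n i k))
   = - ((ddg i j l k + ddg i l j k - ddg i k j l)/2 - (ddg j i l k + ddg j l i k - ddg j k i l)/2
     - (\<Sum>m\<in>UNIV. \<Sum>n\<in>UNIV. Gl m i k * h m n * Gl n j l) + (\<Sum>m\<in>UNIV. \<Sum>n\<in>UNIV. Gl m j k * h m n * Gl n i l))"
proof -
  have s1: "(\<Sum>m\<in>UNIV. \<Sum>n\<in>UNIV. Gl m j k * h m n * Gl n i l) = (\<Sum>m\<in>UNIV. \<Sum>n\<in>UNIV. Gl m i l * h m n * Gl n j k)"
    by (subst sum.swap) (simp add: hs mult.commute mult.left_commute)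
  have s2: "(\<Sum>m\<in>UNIV. \<Sum>n\<in>UNIV. Gl m i k * h m n * Gl n j l) = (\<Sum>m\<in>UNIV. \<Sum>n\<in>UNIV. Gl m j l * h m n * Gl n i k)"
    by (subst sum.swap) (simp add: hs mult.commute mult.left_commute)
  show ?thesis unfolding s1 s2 using d1[of j i] d2 by (simp add: field_simps)
qed

lemma ricci_identity_expr:
  fixes G :: "idx \<Rightarrow> idx \<Rightarrow> idx \<Rightarrow> real" and dG :: "idx \<Rightarrow> idx \<Rightarrow> idx \<Rightarrow> idx \<Rightarrow> real" and df :: "idx \<Rightarrow> real" and ddf :: "idx \<Rightarrow> idx \<Rightarrow> real"
    and dddf :: "idx \<Rightarrow> idx \<Rightarrow> idx \<Rightarrow> real"
  assumes Gs: "\<And>m i j. G m i j = G m j i" and ddf_sym: "\<And>i j. ddf i j = ddf j i"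
    and dddf_sym: "\<And>i j k. dddf i j k = dddf j i k"
  defines "H \<equiv> \<lambda>j k. ddf j k - (\<Sum>m\<in>UNIV. G m j k * df m)"
  defines "dH \<equiv> \<lambda>i j k. dddf i j k - (\<Sum>m\<in>UNIV. dG i m j k * df m + G m j k * ddf i m)"
  defines "DH \<equiv> \<lambda>i j k. dH i j k - (\<Sum>l\<in>UNIV. G l i j * H l k + G l i k * H j l)"
  shows "DH i j k - DH j i k = - (\<Sum>m\<in>UNIV. riem_expr G dG m k i j * df m)"
  unfolding DH_def dH_def H_def riem_expr_def
  by (simp add: sum_3 Gs ddf_sym dddf_sym[of j i]) algebra

lemma miao_tam_cov_deriv_expr:
  fixes g Ric H :: "idx \<Rightarrow> idx \<Rightarrow> real" and G dg dH dRic :: "idx \<Rightarrow> idx \<Rightarrow> idx \<Rightarrow> real"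
    and df dlap :: "idx \<Rightarrow> real" and f0 lap :: real
  assumes ricci_eq: "\<And>j k. f0 * Ric j k = - lap * g j k + H j k - g j k"
    and d_ricci_eq: "\<And>i j k. f0 * dRic i j k = - (dlap i * g j k + lap * dg i j k) + dH i j k - df i * Ric j k - dg i j k"
    and mc: "\<And>i j k. dg i j k = (\<Sum>l\<in>UNIV. G l i j * g l k) + (\<Sum>l\<in>UNIV. G l i k * g j l)"
  shows "f0 * (dRic i j k - (\<Sum>l\<in>UNIV. G l i j * Ric l k + G l i k * Ric j l))
    = - dlap i * g j k + (dH i j k - (\<Sum>l\<in>UNIV. G l i j * H l k + G l i k * H j l)) - df i * Ric j k"
proof -
  have "f0 * (dRic i j k - (\<Sum>l\<in>UNIV. G l i j * Ric l k + G l i k * Ric j l))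
     = f0 * dRic i j k - (\<Sum>l\<in>UNIV. G l i j * (f0 * Ric l k) + G l i k * (f0 * Ric j l))"
    by (simp add: algebra_simps sum_distrib_left)
  also have "\<dots> = - dlap i * g j k + (dH i j k - (\<Sum>l\<in>UNIV. G l i j * H l k + G l i k * H j l)) - df i * Ric j k"
    unfolding ricci_eq d_ricci_eq mc[of i j k]
    by (simp add: sum_3; algebra)
  finally show ?thesis .
qed

definition raise3 :: "(idx \<Rightarrow> idx \<Rightarrow> real) \<Rightarrow> (idx \<Rightarrow> idx \<Rightarrow> idx \<Rightarrow> real) \<Rightarrow> idx \<Rightarrow> idx \<Rightarrow> idx \<Rightarrow> real" where
  "raise3 h B i j k = (\<Sum>a\<in>UNIV. \<Sum>b\<in>UNIV. \<Sum>c\<in>UNIV. h i a * h j b * h k c * B a b c)"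

definition tensor_inner :: "(idx \<Rightarrow> idx \<Rightarrow> real) \<Rightarrow> (idx \<Rightarrow> idx \<Rightarrow> idx \<Rightarrow> real) \<Rightarrow> (idx \<Rightarrow> idx \<Rightarrow> idx \<Rightarrow> real) \<Rightarrow> real" where
  "tensor_inner h A B = (\<Sum>i\<in>UNIV. \<Sum>j\<in>UNIV. \<Sum>k\<in>UNIV. \<Sum>a\<in>UNIV. \<Sum>b\<in>UNIV. \<Sum>c\<in>UNIV.
      h i a * h j b * h k c * A i j k * B a b c)"

lemma tensor_inner_eq_raise3:
  "tensor_inner h A B = (\<Sum>i\<in>UNIV. \<Sum>j\<in>UNIV. \<Sum>k\<in>UNIV. A i j k * raise3 h B i j k)"
  unfolding tensor_inner_def raise3_def by (simp add: sum_distrib_left ac_simps)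

lemma tensor_inner_add_right:
  "tensor_inner h A (\<lambda>i j k. B i j k + D i j k) = tensor_inner h A B + tensor_inner h A D"
  unfolding tensor_inner_def by (simp add: distrib_left sum.distrib)

lemma tensor_inner_diff_right:
  "tensor_inner h A (\<lambda>i j k. B i j k - D i j k) = tensor_inner h A B - tensor_inner h A D"
  unfolding tensor_inner_def by (simp add: right_diff_distrib sum_subtractf)

lemma tensor_inner_scale_right:
  "tensor_inner h A (\<lambda>i j k. c * B i j k) = c * tensor_inner h A B"
  unfolding tensor_inner_def by (simp add: sum_distrib_left ac_simps)

lemma raise3_tensor_product:
  "raise3 h (\<lambda>a b c. u a * T b c) i j k
     = (\<Sum>a\<in>UNIV. h i a * u a) * (\<Sum>b\<in>UNIV. \<Sum>c\<in>UNIV. h j b * h k c * T b c)"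
  unfolding raise3_def sum_product by (simp add: sum_distrib_left ac_simps)

lemma raise3_swap12: "raise3 h (\<lambda>a b c. B b a c) i j k = raise3 h B j i k"
  unfolding raise3_def by (subst sum.swap) (simp add: ac_simps)

lemma raise2_metric:
  fixes h g :: "idx \<Rightarrow> idx \<Rightarrow> real"
  assumes hs: "\<And>a b. h a b = h b a" and gh: "\<And>a c. (\<Sum>b\<in>UNIV. g a b * h b c) = (if a = c then 1 else 0)"
  shows "(\<Sum>b\<in>UNIV. \<Sum>c\<in>UNIV. h j b * h k c * g b c) = h j k"
proof -
  have "(\<Sum>b\<in>UNIV. \<Sum>c\<in>UNIV. h j b * h k c * g b c) = (\<Sum>b\<in>UNIV. h j b * (\<Sum>c\<in>UNIV. g b c * h c k))"
    by (simp add: sum_distrib_left hs mult.commute mult.left_commute)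
  then show ?thesis using gh by simp
qed

lemma tensor_inner_antisym_swap:
  assumes anti: "\<And>i j k. C j i k = - C i j k"
  shows "tensor_inner h C (\<lambda>i j k. B j i k) = - tensor_inner h C B"
proof -
  have "tensor_inner h C (\<lambda>i j k. B j i k) = (\<Sum>i\<in>UNIV. \<Sum>j\<in>UNIV. \<Sum>k\<in>UNIV. C i j k * raise3 h B j i k)"
    unfolding tensor_inner_eq_raise3 raise3_swap12[of h B] ..
  also have "\<dots> = (\<Sum>j\<in>UNIV. \<Sum>i\<in>UNIV. \<Sum>k\<in>UNIV. C i j k * raise3 h B j i k)"
    by (rule sum.swap)
  also have "\<dots> = (\<Sum>j\<in>UNIV. \<Sum>i\<in>UNIV. \<Sum>k\<in>UNIV. - (C j i k * raise3 h B j i k))"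
    by (intro sum.cong refl) (subst anti, simp)
  finally show ?thesis unfolding tensor_inner_eq_raise3 by (simp add: sum_negf)
qed

lemma tensor_inner_trace_free:
  fixes h g :: "idx \<Rightarrow> idx \<Rightarrow> real"
  assumes hs: "\<And>a b. h a b = h b a" and gh: "\<And>a c. (\<Sum>b\<in>UNIV. g a b * h b c) = (if a = c then 1 else 0)"
    and trace_free: "\<And>i. (\<Sum>j\<in>UNIV. \<Sum>k\<in>UNIV. h j k * C i j k) = 0"
  shows "tensor_inner h C (\<lambda>i j k. u i * g j k) = 0"
proof -
  have "tensor_inner h C (\<lambda>i j k. u i * g j k)
      = (\<Sum>i\<in>UNIV. (\<Sum>a\<in>UNIV. h i a * u a) * (\<Sum>j\<in>UNIV. \<Sum>k\<in>UNIV. h j k * C i j k))"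
    unfolding tensor_inner_eq_raise3 raise3_tensor_product raise2_metric[OF hs gh]
    by (simp add: sum_distrib_left ac_simps)
  then show ?thesis using trace_free by simp
qed

lemma contraction_of_cotton_type_tensor:
  fixes h g R :: "idx \<Rightarrow> idx \<Rightarrow> real" and C :: "idx \<Rightarrow> idx \<Rightarrow> idx \<Rightarrow> real" and \<phi> u :: "idx \<Rightarrow> real"
  assumes hs: "\<And>a b. h a b = h b a" and gh: "\<And>a c. (\<Sum>b\<in>UNIV. g a b * h b c) = (if a = c then 1 else 0)"
    and anti: "\<And>i j k. C j i k = - C i j k"
    and trace_free: "\<And>i. (\<Sum>j\<in>UNIV. \<Sum>k\<in>UNIV. h j k * C i j k) = 0"
    and eq: "\<And>i j k. fx * C i j k = -2 * (\<phi> i * R j k - \<phi> j * R i k) + u i * g j k - u j * g i k"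
  shows "fx\<^sup>2 * tensor_inner h C C = - 4 * fx * tensor_inner h C (\<lambda>i j k. \<phi> i * (R j k - s * g j k))"
proof -
  have tr: "tensor_inner h C (\<lambda>i j k. v i * g j k) = 0" for v
    by (rule tensor_inner_trace_free[OF hs gh trace_free])
  have swap: "tensor_inner h C (\<lambda>i j k. B j i k) = - tensor_inner h C B" for B
    by (rule tensor_inner_antisym_swap[OF anti])
  have "fx\<^sup>2 * tensor_inner h C C = fx * tensor_inner h C (\<lambda>i j k. fx * C i j k)"
    by (simp add: tensor_inner_scale_right power2_eq_square)
  also have "\<dots> = -4 * fx * tensor_inner h C (\<lambda>i j k. \<phi> i * R j k)"
    unfolding eq tensor_inner_add_right tensor_inner_diff_right tensor_inner_scale_right
    using swap[of "\<lambda>i j k. \<phi> i * R j k"] swap[of "\<lambda>i j k. u i * g j k"] tr[of u] by simp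
  also have "\<dots> = - 4 * fx * tensor_inner h C (\<lambda>i j k. \<phi> i * R j k - s * (\<phi> i * g j k))"
    unfolding tensor_inner_diff_right tensor_inner_scale_right tr by simp
  also have "(\<lambda>i j k. \<phi> i * R j k - s * (\<phi> i * g j k)) = (\<lambda>i j k. \<phi> i * (R j k - s * g j k))"
    by (simp add: algebra_simps)
  finally show ?thesis .
qed

section \<open>Riemannian metrics in a chart\<close>

text \<open>\<open>riem g y m k i j\<close> is \<open>R\<^sup>m\<^sub>k\<^sub>i\<^sub>j\<close>, the \<open>\<partial>\<^sub>m\<close>-component of \<open>R(\<partial>\<^sub>i, \<partial>\<^sub>j) \<partial>\<^sub>k\<close>, so that
  \<open>ricci g y k j = R\<^sup>m\<^sub>k\<^sub>m\<^sub>j\<close>.\<close>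

definition riem :: "(pt \<Rightarrow> idx \<Rightarrow> idx \<Rightarrow> real) \<Rightarrow> pt \<Rightarrow> idx \<Rightarrow> idx \<Rightarrow> idx \<Rightarrow> idx \<Rightarrow> real" where
  "riem g y m k i j = pd i (\<lambda>y. christoffel g y m j k) y - pd j (\<lambda>y. christoffel g y m i k) y
     + (\<Sum>p\<in>UNIV. christoffel g y m i p * christoffel g y p j k)
     - (\<Sum>p\<in>UNIV. christoffel g y m j p * christoffel g y p i k)"

definition riem_lower :: "(pt \<Rightarrow> idx \<Rightarrow> idx \<Rightarrow> real) \<Rightarrow> pt \<Rightarrow> idx \<Rightarrow> idx \<Rightarrow> idx \<Rightarrow> idx \<Rightarrow> real" where
  "riem_lower g y l k i j = (\<Sum>m\<in>UNIV. g y l m * riem g y m k i j)"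

definition d_christoffel :: "(pt \<Rightarrow> idx \<Rightarrow> idx \<Rightarrow> real) \<Rightarrow> pt \<Rightarrow> idx \<Rightarrow> idx \<Rightarrow> idx \<Rightarrow> idx \<Rightarrow> real" where
  "d_christoffel g y n m i j = pd n (\<lambda>z. christoffel g z m i j) y"

definition dd_christoffel :: "(pt \<Rightarrow> idx \<Rightarrow> idx \<Rightarrow> real) \<Rightarrow> pt \<Rightarrow> idx \<Rightarrow> idx \<Rightarrow> idx \<Rightarrow> idx \<Rightarrow> idx \<Rightarrow> real" where
  "dd_christoffel g y n i m j k = pd n (pd i (\<lambda>z. christoffel g z m j k)) y"

lemma riem_eq_riem_expr: "riem g y = riem_expr (christoffel g y) (d_christoffel g y)"
  by (intro ext) (simp add: riem_def riem_expr_def d_christoffel_def)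

locale riemannian_chart =
  fixes U :: "pt set" and g :: "pt \<Rightarrow> idx \<Rightarrow> idx \<Rightarrow> real"
  assumes U: "open U" and riem_metric: "riem_metric_on U g"
begin

lemma metric_sym: "y \<in> U \<Longrightarrow> g y a b = g y b a"
  using riem_metric unfolding riem_metric_on_def by blast

lemma metric_smooth: "smooth_on U (\<lambda>y. g y a b)"
  using riem_metric unfolding riem_metric_on_def by blast

lemma metric_pos_def: "y \<in> U \<Longrightarrow> v \<noteq> 0 \<Longrightarrow> (\<Sum>i\<in>UNIV. \<Sum>j\<in>UNIV. g y i j * v$i * v$j) > 0"
  using riem_metric unfolding riem_metric_on_def by blast

lemma det3_metric_nonzero: assumes y: "y \<in> U" shows "det3 (g y) \<noteq> 0"
proof -
  let ?A = "\<chi> a b. g y a b"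
  have inj: "inj (\<lambda>x. ?A *v x)"
  proof (rule injI)
    fix x z assume e: "?A *v x = ?A *v z"
    let ?v = "x - z"
    have z: "?A *v ?v = 0" using e by (simp add: matrix_vector_mult_diff_distrib)
    have "(\<Sum>i\<in>UNIV. \<Sum>j\<in>UNIV. g y i j * ?v$i * ?v$j) = (\<Sum>i\<in>UNIV. ?v$i * (?A *v ?v)$i)"
      by (simp add: matrix_vector_mult_def sum_distrib_left algebra_simps)
    also have "\<dots> = 0" using z by simp
    finally show "x = z" using metric_pos_def[OF y, of ?v] by (metis eq_iff_diff_eq_0 less_irrefl)
  qed
  have "det (matrix (\<lambda>x. ?A *v x)) \<noteq> 0" using det_nz_iff_inj[of "\<lambda>x. ?A *v x"] inj by simp
  then have "det ?A \<noteq> 0" by simp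
  moreover have "det ?A = det3 (g y)" by (simp add: det_3 det3_expand algebra_simps)
  ultimately show ?thesis by simp
qed

lemma ginv_eq_adj3: assumes y: "y \<in> U" shows "ginv g y a b = adj3 (g y) a b / det3 (g y)"
proof -
  let ?A = "\<chi> a b. g y a b" and ?B = "\<chi> a b. adj3 (g y) a b / det3 (g y)"
  have gs: "\<And>a b. g y a b = g y b a" using metric_sym[OF y] by blast
  have asym: "\<And>a b. adj3 (g y) a b = adj3 (g y) b a" by (rule adj3_sym[OF gs])
  have dn: "det3 (g y) \<noteq> 0" by (rule det3_metric_nonzero[OF y])
  have AB: "?A ** ?B = mat 1"
  proof -
    have "(\<Sum>j\<in>UNIV. g y i j * (adj3 (g y) j k / det3 (g y))) = (if i = k then 1 else 0)" for i k
    proof -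
      have "(\<Sum>j\<in>UNIV. g y i j * (adj3 (g y) j k / det3 (g y))) = (\<Sum>j\<in>UNIV. g y i j * adj3 (g y) k j) / det3 (g y)"
        by (simp add: sum_divide_distrib asym)
      also have "\<dots> = (if i = k then 1 else 0)" using adj3_row_expansion[of "g y" i k] dn by auto
      finally show ?thesis .
    qed
    then show ?thesis by (simp add: matrix_matrix_mult_def mat_def vec_eq_iff)
  qed
  have BA: "?B ** ?A = mat 1"
  proof -
    have "(\<Sum>j\<in>UNIV. adj3 (g y) i j / det3 (g y) * g y j k) = (if i = k then 1 else 0)" for i k
    proof -
      have "(\<Sum>j\<in>UNIV. adj3 (g y) i j / det3 (g y) * g y j k) = (\<Sum>j\<in>UNIV. g y j k * adj3 (g y) j i) / det3 (g y)"
        by (simp add: sum_divide_distrib asym mult.commute)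
      also have "\<dots> = (if i = k then 1 else 0)" using adj3_col_expansion[of "g y" k i] dn by auto
      finally show ?thesis .
    qed
    then show ?thesis by (simp add: matrix_matrix_mult_def mat_def vec_eq_iff)
  qed
  have ex: "\<exists>C. ?A ** C = mat 1 \<and> C ** ?A = mat 1" using AB BA by blast
  let ?C = "matrix_inv ?A"
  have C: "?A ** ?C = mat 1 \<and> ?C ** ?A = mat 1"
    unfolding matrix_inv_def by (rule someI_ex[OF ex])
  have "?C = ?C ** (?A ** ?B)" using AB by (simp add: matrix_mul_rid)
  also have "\<dots> = (?C ** ?A) ** ?B" by (simp add: matrix_mul_assoc)
  also have "\<dots> = ?B" using C by (simp add: matrix_mul_lid)
  finally have "?C = ?B" .
  then show ?thesis unfolding ginv_def by simp
qed

lemma adj3_metric_smooth: "smooth_on U (\<lambda>y. adj3 (g y) a b)"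
  unfolding adj3_def by (intro smooth_on_diff smooth_on_mult metric_smooth U)

lemma det3_metric_smooth: "smooth_on U (\<lambda>y. det3 (g y))"
  unfolding det3_def by (intro smooth_on_sum smooth_on_mult metric_smooth adj3_metric_smooth U finite)

lemma ginv_smooth: "smooth_on U (\<lambda>y. ginv g y a b)"
proof (rule smooth_on_cong[OF U])
  show "smooth_on U (\<lambda>y. adj3 (g y) a b / det3 (g y))"
    using det3_metric_nonzero by (intro smooth_on_divide adj3_metric_smooth det3_metric_smooth U) auto
  show "\<forall>y\<in>U. ginv g y a b = adj3 (g y) a b / det3 (g y)" using ginv_eq_adj3 by blast
qed

lemma ginv_sym: "y \<in> U \<Longrightarrow> ginv g y a b = ginv g y b a"
  using ginv_eq_adj3 adj3_sym metric_sym by metis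

lemma ginv_metric: assumes y: "y \<in> U" shows "(\<Sum>b\<in>UNIV. ginv g y a b * g y b c) = (if a = c then 1 else 0)"
proof -
  have asym: "\<And>a b. adj3 (g y) a b = adj3 (g y) b a" by (rule adj3_sym) (use metric_sym[OF y] in blast)
  have "(\<Sum>b\<in>UNIV. ginv g y a b * g y b c) = (\<Sum>b\<in>UNIV. g y b c * adj3 (g y) b a) / det3 (g y)"
    using y by (simp add: ginv_eq_adj3 sum_divide_distrib asym mult.commute)
  also have "\<dots> = (if a = c then 1 else 0)" using adj3_col_expansion[of "g y" c a] det3_metric_nonzero[OF y] by auto
  finally show ?thesis .
qed

lemma metric_ginv: assumes y: "y \<in> U" shows "(\<Sum>b\<in>UNIV. g y a b * ginv g y b c) = (if a = c then 1 else 0)"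
proof -
  have "(\<Sum>b\<in>UNIV. g y a b * ginv g y b c) = (\<Sum>b\<in>UNIV. ginv g y c b * g y b a)"
    using y by (simp add: metric_sym ginv_sym mult.commute)
  then show ?thesis using ginv_metric[OF y, of c a] by auto
qed

lemma christoffel_smooth: "smooth_on U (\<lambda>y. christoffel g y k i j)"
  unfolding christoffel_def
  by (intro smooth_on_cmult smooth_on_sum smooth_on_mult smooth_on_add smooth_on_diff ginv_smooth smooth_on_pd metric_smooth U finite)

lemma pd_metric_sym: "y \<in> U \<Longrightarrow> pd i (\<lambda>y. g y a b) y = pd i (\<lambda>y. g y b a) y"
  by (rule pd_cong_open[OF U]) (auto simp: metric_sym)

lemma christoffel_sym: "y \<in> U \<Longrightarrow> christoffel g y k i j = christoffel g y k j i"
  unfolding christoffel_def by (simp add: pd_metric_sym[of y _ i j] algebra_simps)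

lemma christoffel_lower: assumes y: "y \<in> U"
  shows "(\<Sum>l\<in>UNIV. g y k l * christoffel g y l i j)
     = (pd i (\<lambda>y. g y j k) y + pd j (\<lambda>y. g y i k) y - pd k (\<lambda>y. g y i j) y) / 2"
proof -
  define X where "X m = pd i (\<lambda>y. g y j m) y + pd j (\<lambda>y. g y i m) y - pd m (\<lambda>y. g y i j) y" for m
  have "(\<Sum>l\<in>UNIV. g y k l * christoffel g y l i j)
     = (1/2) * (\<Sum>l\<in>UNIV. g y k l * (\<Sum>m\<in>UNIV. ginv g y l m * X m))"
    unfolding christoffel_def X_def by (simp add: sum_distrib_left mult.left_commute)
  also have "\<dots> = (1/2) * X k"
    by (subst sum_inverse_contract[where X=X], rule metric_ginv[OF y], rule refl)
  finally show ?thesis by (simp add: X_def)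
qed

lemma metric_compatible: assumes y: "y \<in> U"
  shows "pd i (\<lambda>y. g y j k) y = (\<Sum>l\<in>UNIV. christoffel g y l i j * g y l k) + (\<Sum>l\<in>UNIV. christoffel g y l i k * g y j l)"
proof -
  have "(\<Sum>l\<in>UNIV. christoffel g y l i j * g y l k) = (\<Sum>l\<in>UNIV. g y k l * christoffel g y l i j)"
    using y by (simp add: metric_sym mult.commute)
  moreover have "(\<Sum>l\<in>UNIV. christoffel g y l i k * g y j l) = (\<Sum>l\<in>UNIV. g y j l * christoffel g y l i k)"
    by (simp add: mult.commute)
  ultimately show ?thesis using christoffel_lower[OF y, of k i j] christoffel_lower[OF y, of j i k] pd_metric_sym[OF y, of i j k] pd_metric_sym[OF y, of k i j]
    pd_metric_sym[OF y, of j i k]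
    by simp
qed

lemma pd_ginv_metric: assumes y: "y \<in> U"
  shows "(\<Sum>b\<in>UNIV. pd m (\<lambda>y. ginv g y a b) y * g y b c + ginv g y a b * pd m (\<lambda>y. g y b c) y) = 0"
proof -
  have "pd m (\<lambda>y. \<Sum>b\<in>UNIV. ginv g y a b * g y b c) y = pd m (\<lambda>y. if a = c then 1 else 0) y"
    by (rule pd_cong_open[OF U y]) (simp add: ginv_metric)
  also have "\<dots> = 0" by (rule pd_const)
  moreover have "pd m (\<lambda>y. \<Sum>b\<in>UNIV. ginv g y a b * g y b c) y = (\<Sum>b\<in>UNIV. pd m (\<lambda>y. ginv g y a b * g y b c) y)"
    by (rule pd_sum[OF _ _ y]) (auto intro: smooth_on_mult ginv_smooth metric_smooth U)
  moreover have "pd m (\<lambda>y. ginv g y a b * g y b c) y = pd m (\<lambda>y. ginv g y a b) y * g y b c + ginv g y a b * pd m (\<lambda>y. g y b c) y" for b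
    by (rule pd_mult[OF ginv_smooth metric_smooth y])
  ultimately show ?thesis by simp
qed

lemma pd_ginv_by_pd_metric: assumes y: "y \<in> U"
  shows "pd m (\<lambda>y. ginv g y a d) y
    = (\<Sum>c\<in>UNIV. (- (\<Sum>b\<in>UNIV. ginv g y a b * pd m (\<lambda>y. g y b c) y)) * ginv g y c d)"
proof (rule solve_by_inverse[where G="g y"])
  show "\<And>b d. (\<Sum>c\<in>UNIV. g y b c * ginv g y c d) = (if b = d then 1 else 0)" by (rule metric_ginv[OF y])
  show "(\<Sum>b\<in>UNIV. pd m (\<lambda>y. ginv g y a b) y * g y b c) = - (\<Sum>b\<in>UNIV. ginv g y a b * pd m (\<lambda>y. g y b c) y)" for c
    using pd_ginv_metric[OF y, of m a c] by (simp add: sum.distrib eq_neg_iff_add_eq_0)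
qed

lemma pd_ginv: assumes y: "y \<in> U"
  shows "pd m (\<lambda>y. ginv g y a d) y =
    - (\<Sum>c\<in>UNIV. christoffel g y a m c * ginv g y c d) - (\<Sum>c\<in>UNIV. christoffel g y d m c * ginv g y a c)"
proof -
  let ?G = "christoffel g y" and ?h = "ginv g y" and ?g = "g y"
  have p1: "(\<Sum>c\<in>UNIV. (\<Sum>b\<in>UNIV. ?h a b * (\<Sum>l\<in>UNIV. ?G l m b * ?g l c)) * ?h c d) = (\<Sum>b\<in>UNIV. ?h a b * ?G d m b)"
  proof -
    have "(\<Sum>c\<in>UNIV. (\<Sum>b\<in>UNIV. ?h a b * (\<Sum>l\<in>UNIV. ?G l m b * ?g l c)) * ?h c d)
       = (\<Sum>c\<in>UNIV. (\<Sum>l\<in>UNIV. (\<Sum>b\<in>UNIV. ?h a b * ?G l m b) * ?g l c) * ?h c d)"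
    proof -
      have "(\<Sum>b\<in>UNIV. ?h a b * (\<Sum>l\<in>UNIV. ?G l m b * ?g l c)) = (\<Sum>l\<in>UNIV. (\<Sum>b\<in>UNIV. ?h a b * ?G l m b) * ?g l c)" for c
        by (simp add: sum_distrib_left sum_distrib_right mult.assoc) (rule sum.swap)
      then show ?thesis by simp
    qed
    also have "\<dots> = (\<Sum>b\<in>UNIV. ?h a b * ?G d m b)" by (rule sum_inverse_contract_right[OF metric_ginv[OF y]])
    finally show ?thesis .
  qed
  have p2: "(\<Sum>c\<in>UNIV. (\<Sum>b\<in>UNIV. ?h a b * (\<Sum>l\<in>UNIV. ?G l m c * ?g b l)) * ?h c d) = (\<Sum>c\<in>UNIV. ?G a m c * ?h c d)"
  proof -
    have "(\<Sum>b\<in>UNIV. ?h a b * (\<Sum>l\<in>UNIV. ?G l m c * ?g b l)) = ?G a m c" for c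
    proof -
      have "(\<Sum>b\<in>UNIV. ?h a b * (\<Sum>l\<in>UNIV. ?G l m c * ?g b l)) = (\<Sum>l\<in>UNIV. (\<Sum>b\<in>UNIV. ?h a b * ?g b l) * ?G l m c)"
        by (simp add: sum_distrib_left sum_distrib_right mult.commute mult.left_commute) (rule sum.swap)
      also have "\<dots> = ?G a m c" using ginv_metric[OF y] by simp
      finally show ?thesis .
    qed
    then show ?thesis by simp
  qed
  have "pd m (\<lambda>y. ginv g y a d) y = - (\<Sum>c\<in>UNIV. (\<Sum>b\<in>UNIV. ?h a b * (\<Sum>l\<in>UNIV. ?G l m b * ?g l c)) * ?h c d)
         - (\<Sum>c\<in>UNIV. (\<Sum>b\<in>UNIV. ?h a b * (\<Sum>l\<in>UNIV. ?G l m c * ?g b l)) * ?h c d)"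
    unfolding pd_ginv_by_pd_metric[OF y] using y by (simp add: metric_compatible distrib_left sum.distrib distrib_right sum_negf left_diff_distrib sum_subtractf)
  also have "\<dots> = - (\<Sum>c\<in>UNIV. ?G a m c * ?h c d) - (\<Sum>c\<in>UNIV. ?G d m c * ?h a c)"
    unfolding p1 p2 by (simp add: mult.commute)
  finally show ?thesis .
qed

lemma d_christoffel_sym: "y \<in> U \<Longrightarrow> d_christoffel g y n m i j = d_christoffel g y n m j i"
  unfolding d_christoffel_def by (rule pd_cong_open[OF U]) (auto simp: christoffel_sym)

lemma dd_christoffel_sym: "y \<in> U \<Longrightarrow> dd_christoffel g y n i m j k = dd_christoffel g y i n m j k"
  unfolding dd_christoffel_def by (rule pd_commute[OF U christoffel_smooth])

lemma riem_smooth: "smooth_on U (\<lambda>y. riem g y m k i j)"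
  unfolding riem_def
  by (intro smooth_on_add smooth_on_diff smooth_on_sum smooth_on_mult smooth_on_pd christoffel_smooth U finite)

lemma ricci_eq_trace_riem: assumes y: "y \<in> U" shows "ricci g y k j = (\<Sum>m\<in>UNIV. riem g y m k m j)"
proof -
  have a: "pd m (\<lambda>y. christoffel g y m k j) y = pd m (\<lambda>y. christoffel g y m j k) y" for m
    by (rule pd_cong_open[OF U y]) (simp add: christoffel_sym)
  have b: "pd j (\<lambda>y. christoffel g y m k m) y = pd j (\<lambda>y. christoffel g y m m k) y" for m
    by (rule pd_cong_open[OF U y]) (simp add: christoffel_sym)
  show ?thesis unfolding ricci_def riem_def
    by (simp add: a b christoffel_sym[OF y, of _ k j] christoffel_sym[OF y, of _ k] sum.distrib sum_subtractf
        algebra_simps)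
qed

lemma ricci_smooth: "smooth_on U (\<lambda>y. ricci g y k j)"
  unfolding ricci_def
  by (intro smooth_on_add smooth_on_diff smooth_on_sum smooth_on_mult smooth_on_pd christoffel_smooth U finite)

lemma pd_riem: assumes y: "y \<in> U"
  shows "pd n (\<lambda>y. riem g y m k i j) y = d_riem_expr (christoffel g y) (d_christoffel g y) (dd_christoffel g y) n m k i j"
proof -
  have s1: "smooth_on U (\<lambda>y. pd i (\<lambda>y. christoffel g y m j k) y - pd j (\<lambda>y. christoffel g y m i k) y)"
    by (intro smooth_on_diff smooth_on_pd christoffel_smooth U)
  have s2: "smooth_on U (\<lambda>y. \<Sum>p\<in>UNIV. christoffel g y m i p * christoffel g y p j k)"
    by (intro smooth_on_sum smooth_on_mult christoffel_smooth U finite)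
  have s3: "smooth_on U (\<lambda>y. \<Sum>p\<in>UNIV. christoffel g y m j p * christoffel g y p i k)"
    by (intro smooth_on_sum smooth_on_mult christoffel_smooth U finite)
  have "pd n (\<lambda>y. riem g y m k i j) y
     = pd n (\<lambda>y. pd i (\<lambda>y. christoffel g y m j k) y - pd j (\<lambda>y. christoffel g y m i k) y) y
       + pd n (\<lambda>y. \<Sum>p\<in>UNIV. christoffel g y m i p * christoffel g y p j k) y
       - pd n (\<lambda>y. \<Sum>p\<in>UNIV. christoffel g y m j p * christoffel g y p i k) y"
    unfolding riem_def
    by (simp add: pd_diff[OF smooth_on_add[OF U s1 s2] s3 y] pd_add[OF s1 s2 y])
  also have "\<dots> = d_riem_expr (christoffel g y) (d_christoffel g y) (dd_christoffel g y) n m k i j"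
    unfolding d_riem_expr_def dd_christoffel_def d_christoffel_def
    by (simp add: pd_diff[OF smooth_on_pd[OF christoffel_smooth] smooth_on_pd[OF christoffel_smooth] y]
        pd_sum[OF _ _ y] smooth_on_mult[OF U christoffel_smooth christoffel_smooth] pd_mult[OF christoffel_smooth christoffel_smooth y]
        sum.distrib)
  finally show ?thesis .
qed

lemma pd_christoffel_lower: assumes y: "y \<in> U"
  shows "pd i (\<lambda>z. \<Sum>m\<in>UNIV. g z l m * christoffel g z m j k) y
    = (pd i (pd j (\<lambda>z. g z k l)) y + pd i (pd k (\<lambda>z. g z j l)) y - pd i (pd l (\<lambda>z. g z j k)) y) / 2"
proof -
  have "pd i (\<lambda>z. \<Sum>m\<in>UNIV. g z l m * christoffel g z m j k) y
     = pd i (\<lambda>z. (1/2) * ((pd j (\<lambda>y. g y k l) z + pd k (\<lambda>y. g y j l) z) - pd l (\<lambda>y. g y j k) z)) y"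
    by (rule pd_cong_open[OF U y]) (simp add: christoffel_lower)
  also have "\<dots> = (1/2) * pd i (\<lambda>z. (pd j (\<lambda>y. g y k l) z + pd k (\<lambda>y. g y j l) z) - pd l (\<lambda>y. g y j k) z) y"
    by (rule pd_cmult[OF _ y]) (intro smooth_on_add smooth_on_diff smooth_on_pd metric_smooth U)
  also have "\<dots> = (1/2) * ((pd i (pd j (\<lambda>y. g y k l)) y + pd i (pd k (\<lambda>y. g y j l)) y) - pd i (pd l (\<lambda>y. g y j k)) y)"
    by (subst pd_diff[OF _ _ y], intro smooth_on_add smooth_on_pd metric_smooth U, intro smooth_on_pd metric_smooth,
        subst pd_add[OF _ _ y], (intro smooth_on_pd metric_smooth)+, rule refl)
  finally show ?thesis by simp
qed

lemma riem_lower_formula: assumes y: "y \<in> U"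
  defines "ddg \<equiv> \<lambda>i j a b. pd i (pd j (\<lambda>z. g z a b)) y"
  defines "Gl \<equiv> \<lambda>a i j. \<Sum>m\<in>UNIV. g y a m * christoffel g y m i j"
  shows "riem_lower g y l k i j = (ddg i j k l + ddg i k j l - ddg i l j k)/2 - (ddg j i k l + ddg j k i l - ddg j l i k)/2
     - (\<Sum>m\<in>UNIV. \<Sum>n\<in>UNIV. Gl m i l * ginv g y m n * Gl n j k) + (\<Sum>m\<in>UNIV. \<Sum>n\<in>UNIV. Gl m j l * ginv g y m n * Gl n i k)"
proof -
  have ii: "pd i (\<lambda>z. \<Sum>m\<in>UNIV. g z l m * christoffel g z m j k) y = (ddg i j k l + ddg i k j l - ddg i l j k)/2" for i j k
    unfolding ddg_def by (rule pd_christoffel_lower[OF y])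
  have i: "(\<Sum>m\<in>UNIV. g y l m * d_christoffel g y i m j k) = pd i (\<lambda>z. \<Sum>m\<in>UNIV. g z l m * christoffel g z m j k) y
      - (\<Sum>m\<in>UNIV. pd i (\<lambda>z. g z l m) y * christoffel g y m j k)" for i j k
  proof -
    have "pd i (\<lambda>z. \<Sum>m\<in>UNIV. g z l m * christoffel g z m j k) y = (\<Sum>m\<in>UNIV. pd i (\<lambda>z. g z l m * christoffel g z m j k) y)"
      by (rule pd_sum[OF _ _ y]) (auto intro: smooth_on_mult U metric_smooth christoffel_smooth)
    also have "\<dots> = (\<Sum>m\<in>UNIV. pd i (\<lambda>z. g z l m) y * christoffel g y m j k + g y l m * d_christoffel g y i m j k)"
      unfolding d_christoffel_def by (simp add: pd_mult[OF metric_smooth christoffel_smooth y])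
    finally show ?thesis by (simp add: sum.distrib)
  qed
  have iii: "pd i (\<lambda>z. g z l m) y = Gl m i l + Gl l i m" for i m
    unfolding Gl_def metric_compatible[OF y] by (simp add: metric_sym[OF y] mult.commute)
  have iv: "christoffel g y m j k = (\<Sum>n\<in>UNIV. ginv g y m n * Gl n j k)" for m j k
    unfolding Gl_def by (rule sum_inverse_contract[symmetric], rule ginv_metric[OF y])
  have v: "(\<Sum>m\<in>UNIV. g y l m * (\<Sum>p\<in>UNIV. christoffel g y m i p * christoffel g y p j k))
      = (\<Sum>p\<in>UNIV. Gl l i p * christoffel g y p j k)" for i j k
    unfolding Gl_def by (simp add: sum_distrib_left sum_distrib_right mult.assoc) (rule sum.swap)
  have "riem_lower g y l k i j = (\<Sum>m\<in>UNIV. g y l m * d_christoffel g y i m j k) - (\<Sum>m\<in>UNIV. g y l m * d_christoffel g y j m i k)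
      + (\<Sum>m\<in>UNIV. g y l m * (\<Sum>p\<in>UNIV. christoffel g y m i p * christoffel g y p j k))
      - (\<Sum>m\<in>UNIV. g y l m * (\<Sum>p\<in>UNIV. christoffel g y m j p * christoffel g y p i k))"
    unfolding riem_lower_def riem_def d_christoffel_def by (simp add: algebra_simps sum.distrib sum_subtractf)
  also have "\<dots> = (ddg i j k l + ddg i k j l - ddg i l j k)/2 - (ddg j i k l + ddg j k i l - ddg j l i k)/2
      - (\<Sum>m\<in>UNIV. Gl m i l * christoffel g y m j k) + (\<Sum>m\<in>UNIV. Gl m j l * christoffel g y m i k)"
    unfolding i ii iii v by (simp add: algebra_simps sum.distrib sum_subtractf)
  also have "\<dots> = (ddg i j k l + ddg i k j l - ddg i l j k)/2 - (ddg j i k l + ddg j k i l - ddg j l i k)/2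
     - (\<Sum>m\<in>UNIV. \<Sum>n\<in>UNIV. Gl m i l * ginv g y m n * Gl n j k) + (\<Sum>m\<in>UNIV. \<Sum>n\<in>UNIV. Gl m j l * ginv g y m n * Gl n i k)"
    by (subst (1 2) iv) (simp add: sum_distrib_left mult.assoc)
  finally show ?thesis .
qed

lemma riem_lower_antisym1: assumes y: "y \<in> U" shows "riem_lower g y l k i j = - riem_lower g y k l i j"
proof -
  let ?ddg = "\<lambda>i j a b. pd i (pd j (\<lambda>z. g z a b)) y"
  have d1: "?ddg i j a b = ?ddg j i a b" for i j a b by (rule pd_commute[OF U metric_smooth y])
  have d2: "?ddg i j a b = ?ddg i j b a" for i j a b
  proof (rule pd_cong_open[OF U y])
    show "pd j (\<lambda>z. g z a b) z = pd j (\<lambda>z. g z b a) z" if "z \<in> U" for z using pd_metric_sym[OF that] .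
  qed
  show ?thesis unfolding riem_lower_formula[OF y, of l k i j] riem_lower_formula[OF y, of k l i j]
    by (rule lowered_curvature_expr_antisym[OF ginv_sym[OF y] d1 d2])
qed

lemma riem_eq_raise: assumes y: "y \<in> U"
  shows "riem g y m k i j = (\<Sum>l\<in>UNIV. ginv g y m l * riem_lower g y l k i j)"
  unfolding riem_lower_def by (rule sum_inverse_contract[symmetric], rule ginv_metric[OF y])

lemma riem_antisym2: "riem g y m k i j = - riem g y m k j i"
  unfolding riem_def by simp

lemma riem_lower_antisym2: "riem_lower g y l k i j = - riem_lower g y l k j i"
  unfolding riem_lower_def by (simp add: riem_antisym2[of _ _ _ i j] sum_negf)

lemma riem_first_bianchi: assumes y: "y \<in> U"
  shows "riem g y m k i j + riem g y m i j k + riem g y m j k i = 0"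
  unfolding riem_eq_riem_expr by (rule first_bianchi_expr) (auto intro: christoffel_sym[OF y] d_christoffel_sym[OF y])

lemma riem_lower_first_bianchi: assumes y: "y \<in> U"
  shows "riem_lower g y l k i j + riem_lower g y l i j k + riem_lower g y l j k i = 0"
proof -
  have "riem_lower g y l k i j + riem_lower g y l i j k + riem_lower g y l j k i
     = (\<Sum>m\<in>UNIV. g y l m * (riem g y m k i j + riem g y m i j k + riem g y m j k i))"
    unfolding riem_lower_def by (simp add: algebra_simps sum.distrib)
  then show ?thesis using riem_first_bianchi[OF y] by simp
qed

lemma ricci_eq_trace_riem_lower: assumes y: "y \<in> U"
  shows "ricci g y k j = (\<Sum>l\<in>UNIV. \<Sum>i\<in>UNIV. ginv g y l i * riem_lower g y l k i j)"
proof -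
  have "(\<Sum>l\<in>UNIV. \<Sum>i\<in>UNIV. ginv g y l i * riem_lower g y l k i j) = (\<Sum>i\<in>UNIV. \<Sum>l\<in>UNIV. ginv g y i l * riem_lower g y l k i j)"
    by (subst sum.swap) (simp add: ginv_sym[OF y])
  also have "\<dots> = (\<Sum>i\<in>UNIV. riem g y i k i j)" by (simp add: riem_eq_raise[OF y])
  finally show ?thesis using ricci_eq_trace_riem[OF y] by simp
qed

lemma trace_riem_lower_eq_ricci: assumes y: "y \<in> U"
  shows "(\<Sum>k\<in>UNIV. \<Sum>j\<in>UNIV. ginv g y k j * riem_lower g y l k j n) = - ricci g y l n"
proof -
  have "(\<Sum>k\<in>UNIV. \<Sum>j\<in>UNIV. ginv g y k j * riem_lower g y l k j n)
      = (\<Sum>k\<in>UNIV. \<Sum>j\<in>UNIV. - (ginv g y k j * riem_lower g y k l j n))"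
    by (simp add: riem_lower_antisym1[OF y, of l])
  also have "\<dots> = - ricci g y l n"
    unfolding ricci_eq_trace_riem_lower[OF y] by (simp add: sum_negf)
  finally show ?thesis .
qed

lemma trace_riem_eq_ricci: assumes y: "y \<in> U"
  shows "(\<Sum>k\<in>UNIV. \<Sum>j\<in>UNIV. ginv g y k j * riem g y m k j n) = - (\<Sum>l\<in>UNIV. ginv g y m l * ricci g y l n)"
proof -
  have "(\<Sum>k\<in>UNIV. \<Sum>j\<in>UNIV. ginv g y k j * riem g y m k j n)
     = (\<Sum>k\<in>UNIV. \<Sum>j\<in>UNIV. \<Sum>l\<in>UNIV. ginv g y m l * (ginv g y k j * riem_lower g y l k j n))"
    by (simp add: riem_eq_raise[OF y] sum_distrib_left mult.left_commute)
  also have "\<dots> = (\<Sum>k\<in>UNIV. \<Sum>l\<in>UNIV. \<Sum>j\<in>UNIV. ginv g y m l * (ginv g y k j * riem_lower g y l k j n))"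
    by (rule sum.cong[OF refl], rule sum.swap)
  also have "\<dots> = (\<Sum>l\<in>UNIV. \<Sum>k\<in>UNIV. \<Sum>j\<in>UNIV. ginv g y m l * (ginv g y k j * riem_lower g y l k j n))"
    by (rule sum.swap)
  also have "\<dots> = (\<Sum>l\<in>UNIV. ginv g y m l * (\<Sum>k\<in>UNIV. \<Sum>j\<in>UNIV. ginv g y k j * riem_lower g y l k j n))"
    by (simp add: sum_distrib_left)
  finally show ?thesis by (simp add: trace_riem_lower_eq_ricci[OF y] sum_negf)
qed

lemma ricci_sym: assumes y: "y \<in> U" shows "ricci g y k j = ricci g y j k"
proof -
  have e: "riem g y m k m j = riem g y m j m k - riem g y m m j k" for m
    using riem_first_bianchi[OF y, of m k m j] riem_antisym2[of y m j k m] by simp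
  have z: "(\<Sum>m\<in>UNIV. riem g y m m j k) = 0"
  proof -
    let ?S = "\<Sum>m\<in>UNIV. \<Sum>l\<in>UNIV. ginv g y m l * riem_lower g y l m j k"
    have r: "(\<Sum>m\<in>UNIV. riem g y m m j k) = ?S" by (simp add: riem_eq_raise[OF y])
    have "?S = - ?S"
    proof -
      have "?S = - (\<Sum>m\<in>UNIV. \<Sum>l\<in>UNIV. ginv g y m l * riem_lower g y m l j k)"
      proof -
        have e: "ginv g y m l * riem_lower g y l m j k = - (ginv g y m l * riem_lower g y m l j k)" for m l
          using riem_lower_antisym1[OF y, of l m j k] by simp
        show ?thesis by (simp only: e sum_negf)
      qed
      also have "(\<Sum>m\<in>UNIV. \<Sum>l\<in>UNIV. ginv g y m l * riem_lower g y m l j k) = ?S"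
        by (subst sum.swap) (simp add: ginv_sym[OF y])
      finally show ?thesis .
    qed
    then show ?thesis using r by simp
  qed
  show ?thesis unfolding ricci_eq_trace_riem[OF y] using z by (simp add: e sum_subtractf)
qed

lemma riem_lower_decomp: assumes y: "y \<in> U"
  shows "riem_lower g y l k i j = ricci g y l i * g y k j - ricci g y l j * g y k i + ricci g y k j * g y l i
      - ricci g y k i * g y l j - scal g y / 2 * (g y l i * g y k j - g y l j * g y k i)"
proof -
  have D: "riem_lower g y l k i j = (\<lambda>k j. \<Sum>l\<in>UNIV. \<Sum>i\<in>UNIV. ginv g y l i * riem_lower g y l k i j) l i * g y k j
      - (\<lambda>k j. \<Sum>l\<in>UNIV. \<Sum>i\<in>UNIV. ginv g y l i * riem_lower g y l k i j) l j * g y k i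
      + (\<lambda>k j. \<Sum>l\<in>UNIV. \<Sum>i\<in>UNIV. ginv g y l i * riem_lower g y l k i j) k j * g y l i
      - (\<lambda>k j. \<Sum>l\<in>UNIV. \<Sum>i\<in>UNIV. ginv g y l i * riem_lower g y l k i j) k i * g y l j
      - (\<Sum>k\<in>UNIV. \<Sum>j\<in>UNIV. ginv g y k j * (\<lambda>k j. \<Sum>l\<in>UNIV. \<Sum>i\<in>UNIV. ginv g y l i * riem_lower g y l k i j) k j) / 2
        * (g y l i * g y k j - g y l j * g y k i)"
    by (rule curvature_tensor_3d_decomp[of "g y" "ginv g y" "riem_lower g y"], rule metric_sym[OF y], rule ginv_eq_adj3[OF y], rule det3_metric_nonzero[OF y],
        rule riem_lower_antisym1[OF y], rule riem_lower_antisym2, rule riem_lower_first_bianchi[OF y])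
  show ?thesis using D unfolding ricci_eq_trace_riem_lower[OF y, symmetric] scal_def by simp
qed

lemma pd_ricci: assumes x: "x \<in> U"
  shows "pd p (\<lambda>y. ricci g y l n) x = (\<Sum>q\<in>UNIV. d_riem_expr (christoffel g x) (d_christoffel g x) (dd_christoffel g x) p q l q n)"
proof -
  have "pd p (\<lambda>y. ricci g y l n) x = pd p (\<lambda>y. \<Sum>q\<in>UNIV. riem g y q l q n) x"
    by (rule pd_cong_open[OF U x]) (simp add: ricci_eq_trace_riem)
  also have "\<dots> = (\<Sum>q\<in>UNIV. pd p (\<lambda>y. riem g y q l q n) x)"
    by (rule pd_sum[OF _ _ x]) (auto intro: riem_smooth)
  finally show ?thesis by (simp add: pd_riem[OF x])
qed

lemma pd_scal: assumes x: "x \<in> U"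
  shows "pd n (scal g) x = (\<Sum>k\<in>UNIV. \<Sum>j\<in>UNIV. pd n (\<lambda>y. ginv g y k j) x * ricci g x k j + ginv g x k j * pd n (\<lambda>y. ricci g y k j) x)"
  unfolding scal_def by (rule pd_sum2_mult[OF ginv_smooth ricci_smooth x U])

lemma pd_trace_riem: assumes x: "x \<in> U"
  shows "(\<Sum>k\<in>UNIV. \<Sum>j\<in>UNIV. pd p (\<lambda>y. ginv g y k j) x * riem_expr (christoffel g x) (d_christoffel g x) m k j n
        + ginv g x k j * d_riem_expr (christoffel g x) (d_christoffel g x) (dd_christoffel g x) p m k j n)
     = - (\<Sum>l\<in>UNIV. pd p (\<lambda>y. ginv g y m l) x * ricci g x l n + ginv g x m l * pd p (\<lambda>y. ricci g y l n) x)"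
proof -
  have "pd p (\<lambda>y. \<Sum>k\<in>UNIV. \<Sum>j\<in>UNIV. ginv g y k j * riem g y m k j n) x
      = pd p (\<lambda>y. (-1) * (\<Sum>l\<in>UNIV. ginv g y m l * ricci g y l n)) x"
    by (rule pd_cong_open[OF U x]) (simp add: trace_riem_eq_ricci)
  also have "\<dots> = (-1) * pd p (\<lambda>y. \<Sum>l\<in>UNIV. ginv g y m l * ricci g y l n) x"
    by (rule pd_cmult[OF _ x]) (intro smooth_on_sum smooth_on_mult ginv_smooth ricci_smooth U finite)
  finally have e: "pd p (\<lambda>y. \<Sum>k\<in>UNIV. \<Sum>j\<in>UNIV. ginv g y k j * riem g y m k j n) x
      = - pd p (\<lambda>y. \<Sum>l\<in>UNIV. ginv g y m l * ricci g y l n) x" by simp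
  have l: "pd p (\<lambda>y. \<Sum>k\<in>UNIV. \<Sum>j\<in>UNIV. ginv g y k j * riem g y m k j n) x
     = (\<Sum>k\<in>UNIV. \<Sum>j\<in>UNIV. pd p (\<lambda>y. ginv g y k j) x * riem g x m k j n + ginv g x k j * pd p (\<lambda>y. riem g y m k j n) x)"
    by (rule pd_sum2_mult[OF ginv_smooth riem_smooth x U])
  have r: "pd p (\<lambda>y. \<Sum>l\<in>UNIV. ginv g y m l * ricci g y l n) x
     = (\<Sum>l\<in>UNIV. pd p (\<lambda>y. ginv g y m l) x * ricci g x l n + ginv g x m l * pd p (\<lambda>y. ricci g y l n) x)"
    by (rule pd_sum_mult[OF ginv_smooth ricci_smooth x U])
  show ?thesis using e unfolding l r pd_riem[OF x] by (simp add: riem_eq_riem_expr)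
qed

lemma trace_cov_deriv_ricci: assumes x: "x \<in> U"
  shows "(\<Sum>j\<in>UNIV. \<Sum>k\<in>UNIV. ginv g x j k * cov_deriv2 g (ricci g) x i j k) = pd i (scal g) x"
  unfolding pd_scal[OF x] cov_deriv2_def by (rule trace_cov_deriv_expr[OF pd_ginv[OF x]])

lemma contracted_bianchi: assumes x: "x \<in> U"
  shows "(\<Sum>k\<in>UNIV. \<Sum>j\<in>UNIV. ginv g x k j * cov_deriv2 g (ricci g) x j k n) = pd n (scal g) x / 2"
proof -
  have "(\<Sum>k\<in>UNIV. \<Sum>j\<in>UNIV. pd n (\<lambda>y. ginv g y k j) x * ricci g x k j + ginv g x k j * pd n (\<lambda>y. ricci g y k j) x)
     = 2 * (\<Sum>k\<in>UNIV. \<Sum>j\<in>UNIV. ginv g x k j * (pd j (\<lambda>y. ricci g y k n) x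
        - (\<Sum>l\<in>UNIV. christoffel g x l j k * ricci g x l n + christoffel g x l j n * ricci g x k l)))"
    by (rule contracted_bianchi_expr[where dh="\<lambda>n a b. pd n (\<lambda>y. ginv g y a b) x" and ric="ricci g x"
          and dric="\<lambda>p l n. pd p (\<lambda>y. ricci g y l n) x"])
       (rule christoffel_sym[OF x] d_christoffel_sym[OF x] dd_christoffel_sym[OF x] ginv_sym[OF x] pd_ginv[OF x]
         trace_riem_eq_ricci[OF x, unfolded riem_eq_riem_expr] pd_trace_riem[OF x]
         ricci_eq_trace_riem[OF x, unfolded riem_eq_riem_expr] pd_ricci[OF x])+
  then show ?thesis unfolding pd_scal[OF x] cov_deriv2_def by simp
qed

lemma cov_deriv_ricci_sym: assumes x: "x \<in> U"
  shows "cov_deriv2 g (ricci g) x i j k = cov_deriv2 g (ricci g) x i k j"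
proof -
  have "pd i (\<lambda>y. ricci g y j k) x = pd i (\<lambda>y. ricci g y k j) x"
    by (rule pd_cong_open[OF U x]) (simp add: ricci_sym)
  then show ?thesis unfolding cov_deriv2_def by (simp add: ricci_sym[OF x] algebra_simps)
qed

lemma riem_contract_covector:
  fixes v :: "idx \<Rightarrow> real"
  assumes x: "x \<in> U"
  defines "F \<equiv> \<lambda>l. \<Sum>m\<in>UNIV. ginv g x l m * v m"
  shows "(\<Sum>m\<in>UNIV. riem g x m k i j * v m) =
     (\<Sum>l\<in>UNIV. F l * ricci g x l i) * g x k j - (\<Sum>l\<in>UNIV. F l * ricci g x l j) * g x k i
     + ricci g x k j * v i - ricci g x k i * v j - scal g x / 2 * (v i * g x k j - v j * g x k i)"
proof -
  have Fg: "(\<Sum>l\<in>UNIV. F l * g x l a) = v a" for a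
  proof -
    have "(\<Sum>l\<in>UNIV. F l * g x l a) = (\<Sum>l\<in>UNIV. \<Sum>m\<in>UNIV. v m * (ginv g x m l * g x l a))"
      unfolding F_def sum_distrib_right by (simp add: ginv_sym[OF x] ac_simps)
    also have "\<dots> = (\<Sum>m\<in>UNIV. v m * (\<Sum>l\<in>UNIV. ginv g x m l * g x l a))"
      by (subst sum.swap) (simp add: sum_distrib_left)
    also have "\<dots> = v a" using ginv_metric[OF x] by simp
    finally show ?thesis .
  qed
  have "(\<Sum>m\<in>UNIV. riem g x m k i j * v m) = (\<Sum>m\<in>UNIV. \<Sum>l\<in>UNIV. v m * ginv g x l m * riem_lower g x l k i j)"
    by (simp add: riem_eq_raise[OF x] sum_distrib_left sum_distrib_right ginv_sym[OF x] ac_simps)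
  also have "\<dots> = (\<Sum>l\<in>UNIV. F l * riem_lower g x l k i j)"
    unfolding F_def by (subst sum.swap) (simp add: sum_distrib_left sum_distrib_right ac_simps)
  also have "\<dots> = (\<Sum>l\<in>UNIV. F l * ricci g x l i) * g x k j - (\<Sum>l\<in>UNIV. F l * ricci g x l j) * g x k i
     + ricci g x k j * (\<Sum>l\<in>UNIV. F l * g x l i) - ricci g x k i * (\<Sum>l\<in>UNIV. F l * g x l j)
     - scal g x / 2 * ((\<Sum>l\<in>UNIV. F l * g x l i) * g x k j - (\<Sum>l\<in>UNIV. F l * g x l j) * g x k i)"
    unfolding riem_lower_decomp[OF x]
    by (simp add: algebra_simps sum.distrib sum_subtractf sum_distrib_left sum_distrib_right)
  finally show ?thesis unfolding Fg .
qed

lemma trace_ginv_metric: assumes x: "x \<in> U"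
  shows "(\<Sum>j\<in>UNIV. \<Sum>k\<in>UNIV. ginv g x j k * g x j k) = 3"
proof -
  have "(\<Sum>j\<in>UNIV. \<Sum>k\<in>UNIV. ginv g x j k * g x j k) = (\<Sum>j\<in>(UNIV::idx set). \<Sum>k\<in>UNIV. g x j k * ginv g x k j)"
    by (simp add: ginv_sym[OF x] mult.commute)
  also have "\<dots> = (\<Sum>j\<in>(UNIV::idx set). 1)" using metric_ginv[OF x] by simp
  finally show ?thesis by simp
qed

lemma cotton_antisym: "cotton g x j i k = - cotton g x i j k"
  unfolding cotton_def by (simp add: algebra_simps)

lemma cotton_trace_free: assumes x: "x \<in> U"
  shows "(\<Sum>j\<in>UNIV. \<Sum>k\<in>UNIV. ginv g x j k * cotton g x i j k) = 0"
proof -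
  let ?DR = "cov_deriv2 g (ricci g) x" and ?ds = "\<lambda>n. pd n (scal g) x"
  have t1: "(\<Sum>j\<in>UNIV. \<Sum>k\<in>UNIV. ginv g x j k * ?DR i j k) = ?ds i"
    by (rule trace_cov_deriv_ricci[OF x])
  have t2: "(\<Sum>j\<in>UNIV. \<Sum>k\<in>UNIV. ginv g x j k * ?DR j i k) = ?ds i / 2"
  proof -
    have "(\<Sum>j\<in>UNIV. \<Sum>k\<in>UNIV. ginv g x j k * ?DR j i k) = (\<Sum>j\<in>UNIV. \<Sum>k\<in>UNIV. ginv g x j k * ?DR j k i)"
      by (simp add: cov_deriv_ricci_sym[OF x, of _ i])
    also have "\<dots> = (\<Sum>k\<in>UNIV. \<Sum>j\<in>UNIV. ginv g x k j * ?DR j k i)"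
      by (subst sum.swap) (simp add: ginv_sym[OF x])
    finally show ?thesis using contracted_bianchi[OF x, of i] by simp
  qed
  have t3: "(\<Sum>j\<in>UNIV. \<Sum>k\<in>UNIV. ginv g x j k * (?ds i * g x j k)) = 3 * ?ds i"
  proof -
    have "(\<Sum>j\<in>UNIV. \<Sum>k\<in>UNIV. ginv g x j k * (?ds i * g x j k))
        = ?ds i * (\<Sum>j\<in>UNIV. \<Sum>k\<in>UNIV. ginv g x j k * g x j k)"
      by (simp add: sum_distrib_left ac_simps)
    then show ?thesis using trace_ginv_metric[OF x] by simp
  qed
  have t4: "(\<Sum>j\<in>UNIV. \<Sum>k\<in>UNIV. ginv g x j k * (?ds j * g x i k)) = ?ds i"
  proof -
    have "(\<Sum>j\<in>UNIV. \<Sum>k\<in>UNIV. ginv g x j k * (?ds j * g x i k))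
        = (\<Sum>j\<in>UNIV. ?ds j * (\<Sum>k\<in>UNIV. g x i k * ginv g x k j))"
      by (simp add: sum_distrib_left ginv_sym[OF x] ac_simps)
    then show ?thesis using metric_ginv[OF x] by simp
  qed
  have "(\<Sum>j\<in>UNIV. \<Sum>k\<in>UNIV. ginv g x j k * cotton g x i j k)
      = (\<Sum>j\<in>UNIV. \<Sum>k\<in>UNIV. ginv g x j k * ?DR i j k) - (\<Sum>j\<in>UNIV. \<Sum>k\<in>UNIV. ginv g x j k * ?DR j i k)
        - 1/4 * ((\<Sum>j\<in>UNIV. \<Sum>k\<in>UNIV. ginv g x j k * (?ds i * g x j k))
          - (\<Sum>j\<in>UNIV. \<Sum>k\<in>UNIV. ginv g x j k * (?ds j * g x i k)))"
    unfolding cotton_def by (simp add: algebra_simps sum.distrib sum_subtractf sum_distrib_left)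
  then show ?thesis unfolding t1 t2 t3 t4 by simp
qed

end

section \<open>Miao-Tam critical metrics\<close>

locale miao_tam_chart = riemannian_chart +
  fixes f :: "pt \<Rightarrow> real"
  assumes smooth_f: "smooth_on U f" and critical: "miao_tam_eq_on U g f"
begin

lemma hess_smooth: "smooth_on U (\<lambda>y. hess g f y i j)"
  unfolding hess_def by (intro smooth_on_diff smooth_on_sum smooth_on_mult smooth_on_pd christoffel_smooth smooth_f U finite)

lemma laplacian_smooth: "smooth_on U (laplacian g f)"
proof -
  have "smooth_on U (\<lambda>y. \<Sum>i\<in>UNIV. \<Sum>j\<in>UNIV. ginv g y i j * hess g f y i j)"
    by (intro smooth_on_sum smooth_on_mult ginv_smooth hess_smooth U finite)
  then show ?thesis unfolding laplacian_def by simp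
qed

lemma miao_tam_ricci: assumes y: "y \<in> U" shows "f y * ricci g y j k = - laplacian g f y * g y j k + hess g f y j k - g y j k"
proof -
  have "- laplacian g f y * g y j k + hess g f y j k - f y * ricci g y j k = g y j k"
    using critical y unfolding miao_tam_eq_on_def by blast
  then show ?thesis by linarith
qed

lemma miao_tam_pd_ricci: assumes x: "x \<in> U"
  shows "f x * pd i (\<lambda>y. ricci g y j k) x = - (pd i (laplacian g f) x * g x j k + laplacian g f x * pd i (\<lambda>y. g y j k) x)
     + pd i (\<lambda>y. hess g f y j k) x - pd i f x * ricci g x j k - pd i (\<lambda>y. g y j k) x"
proof -
  have "pd i (\<lambda>y. - (laplacian g f y * g y j k) + hess g f y j k - f y * ricci g y j k) x = pd i (\<lambda>y. g y j k) x"
    by (rule pd_cong_open[OF U x]) (use critical in \<open>auto simp: miao_tam_eq_on_def\<close>)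
  moreover have "pd i (\<lambda>y. - (laplacian g f y * g y j k) + hess g f y j k - f y * ricci g y j k) x
     = - (pd i (laplacian g f) x * g x j k + laplacian g f x * pd i (\<lambda>y. g y j k) x)
       + pd i (\<lambda>y. hess g f y j k) x - (pd i f x * ricci g x j k + f x * pd i (\<lambda>y. ricci g y j k) x)"
  proof -
    have s1: "smooth_on U (\<lambda>y. laplacian g f y * g y j k)" by (intro smooth_on_mult laplacian_smooth metric_smooth U)
    have s2: "smooth_on U (\<lambda>y. - (laplacian g f y * g y j k))"
      using smooth_on_cmult[OF U s1, of "-1"] by simp
    have s3: "smooth_on U (\<lambda>y. f y * ricci g y j k)" by (intro smooth_on_mult smooth_f ricci_smooth U)
    have "pd i (\<lambda>y. - (laplacian g f y * g y j k)) x = - pd i (\<lambda>y. laplacian g f y * g y j k) x"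
      using pd_cmult[OF s1 x, of i "-1"] by simp
    then show ?thesis
      by (subst pd_diff[OF smooth_on_add[OF U s2 hess_smooth] s3 x], subst pd_add[OF s2 hess_smooth x])
        (simp add: pd_mult[OF laplacian_smooth metric_smooth x] pd_mult[OF smooth_f ricci_smooth x])
  qed
  ultimately show ?thesis by (simp add: algebra_simps)
qed

lemma pd_hess: assumes x: "x \<in> U"
  shows "pd i (\<lambda>y. hess g f y j k) x = pd i (pd j (pd k f)) x
     - (\<Sum>m\<in>UNIV. d_christoffel g x i m j k * pd m f x + christoffel g x m j k * pd i (pd m f) x)"
proof -
  have s: "smooth_on U (\<lambda>y. \<Sum>m\<in>UNIV. christoffel g y m j k * pd m f y)"
    by (intro smooth_on_sum smooth_on_mult christoffel_smooth smooth_on_pd smooth_f U finite)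
  have "pd i (\<lambda>y. hess g f y j k) x = pd i (pd j (pd k f)) x - pd i (\<lambda>y. \<Sum>m\<in>UNIV. christoffel g y m j k * pd m f y) x"
    unfolding hess_def by (rule pd_diff[OF smooth_on_pd[OF smooth_on_pd[OF smooth_f]] s x])
  also have "pd i (\<lambda>y. \<Sum>m\<in>UNIV. christoffel g y m j k * pd m f y) x
     = (\<Sum>m\<in>UNIV. d_christoffel g x i m j k * pd m f x + christoffel g x m j k * pd i (pd m f) x)"
    unfolding d_christoffel_def
    by (simp add: pd_sum[OF _ _ x] smooth_on_mult[OF U christoffel_smooth smooth_on_pd[OF smooth_f]] pd_mult[OF christoffel_smooth smooth_on_pd[OF smooth_f] x])
  finally show ?thesis .
qed

lemma miao_tam_cov_deriv_ricci: assumes x: "x \<in> U"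
  shows "f x * cov_deriv2 g (ricci g) x i j k = - pd i (laplacian g f) x * g x j k
     + (pd i (\<lambda>y. hess g f y j k) x - (\<Sum>l\<in>UNIV. christoffel g x l i j * hess g f x l k + christoffel g x l i k * hess g f x j l))
     - pd i f x * ricci g x j k"
  unfolding cov_deriv2_def
  by (rule miao_tam_cov_deriv_expr[where dg="\<lambda>i j k. pd i (\<lambda>y. g y j k) x"
        and dH = "\<lambda>i j k. pd i (\<lambda>y. hess g f y j k) x" and dRic="\<lambda>i j k. pd i (\<lambda>y. ricci g y j k) x"
        and df="\<lambda>m. pd m f x" and dlap="\<lambda>i. pd i (laplacian g f) x" and lap="laplacian g f x"])
     (auto simp: christoffel_sym[OF x] hess_def miao_tam_ricci[OF x] miao_tam_pd_ricci[OF x] metric_compatible[OF x])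

lemma ricci_identity_hess: assumes x: "x \<in> U"
  shows "(pd i (\<lambda>y. hess g f y j k) x - (\<Sum>l\<in>UNIV. christoffel g x l i j * hess g f x l k + christoffel g x l i k * hess g f x j l))
     - (pd j (\<lambda>y. hess g f y i k) x - (\<Sum>l\<in>UNIV. christoffel g x l j i * hess g f x l k + christoffel g x l j k * hess g f x i l))
     = - (\<Sum>m\<in>UNIV. riem g x m k i j * pd m f x)"
proof -
  have H: "hess g f x a b = pd a (pd b f) x - (\<Sum>m\<in>UNIV. christoffel g x m a b * pd m f x)" for a b
    unfolding hess_def by simp
  show ?thesis unfolding pd_hess[OF x] H riem_eq_riem_expr
    by (rule ricci_identity_expr[where dddf="\<lambda>i j k. pd i (pd j (pd k f)) x" and ddf="\<lambda>a b. pd a (pd b f) x"])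
       (auto simp: christoffel_sym[OF x] pd_commute[OF U smooth_f x] pd_commute[OF U smooth_on_pd[OF smooth_f] x])
qed

lemma miao_tam_cov_deriv_ricci_skew: assumes x: "x \<in> U"
  obtains w where "\<And>i j k. f x * (cov_deriv2 g (ricci g) x i j k - cov_deriv2 g (ricci g) x j i k)
    = -2 * (pd i f x * ricci g x j k - pd j f x * ricci g x i k) + g x j k * w i - g x i k * w j"
proof -
  define w where "w i = - pd i (laplacian g f) x
    - ((\<Sum>l\<in>UNIV. (\<Sum>m\<in>UNIV. ginv g x l m * pd m f x) * ricci g x l i) - scal g x / 2 * pd i f x)" for i
  have "f x * (cov_deriv2 g (ricci g) x i j k - cov_deriv2 g (ricci g) x j i k)
    = -2 * (pd i f x * ricci g x j k - pd j f x * ricci g x i k) + g x j k * w i - g x i k * w j" for i j k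
  proof -
    have "f x * (cov_deriv2 g (ricci g) x i j k - cov_deriv2 g (ricci g) x j i k)
       = - pd i (laplacian g f) x * g x j k + pd j (laplacian g f) x * g x i k
         - (\<Sum>m\<in>UNIV. riem g x m k i j * pd m f x) - pd i f x * ricci g x j k + pd j f x * ricci g x i k"
      unfolding right_diff_distrib miao_tam_cov_deriv_ricci[OF x] using ricci_identity_hess[OF x, of i j k] by simp
    also have "\<dots> = -2 * (pd i f x * ricci g x j k - pd j f x * ricci g x i k) + g x j k * w i - g x i k * w j"
      unfolding riem_contract_covector[OF x] w_def
      by (simp add: algebra_simps ricci_sym[OF x, of k] metric_sym[OF x, of k])
    finally show ?thesis .
  qed
  then show ?thesis by (rule that)
qed

lemma miao_tam_cotton: assumes x: "x \<in> U"
  obtains u where "\<And>i j k. f x * cotton g x i j k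
    = -2 * (pd i f x * ricci g x j k - pd j f x * ricci g x i k) + u i * g x j k - u j * g x i k"
proof -
  obtain w where w: "\<And>i j k. f x * (cov_deriv2 g (ricci g) x i j k - cov_deriv2 g (ricci g) x j i k)
      = -2 * (pd i f x * ricci g x j k - pd j f x * ricci g x i k) + g x j k * w i - g x i k * w j"
    using miao_tam_cov_deriv_ricci_skew[OF x] by blast
  show ?thesis
  proof (rule that)
    fix i j k
    show "f x * cotton g x i j k = -2 * (pd i f x * ricci g x j k - pd j f x * ricci g x i k)
        + (w i - f x * pd i (scal g) x / 4) * g x j k - (w j - f x * pd j (scal g) x / 4) * g x i k"
      using w[of i j k] unfolding cotton_def by (simp add: algebra_simps)
  qed
qed

end

theorem lemma4:
  fixes U :: "(real^3) set" and g :: "real^3 \<Rightarrow> 3 \<Rightarrow> 3 \<Rightarrow> real" and f :: "real^3 \<Rightarrow> real"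
  assumes "open U"
    and "riem_metric_on U g"
    and "smooth_on U f"
    and "miao_tam_eq_on U g f"
    and "x \<in> U"
  shows "(f x)^2 * cotton_norm2 g x =
     - 4 * f x * (\<Sum>i\<in>UNIV. \<Sum>j\<in>UNIV. \<Sum>k\<in>UNIV. cotton g x i j k * (\<Sum>a\<in>UNIV. ginv g x i a * pd a f x)
         * (\<Sum>b\<in>UNIV. \<Sum>c\<in>UNIV. ginv g x j b * ginv g x k c * traceless_ricci g x b c))"
proof -
  interpret miao_tam_chart U g f using assms(1-4) by unfold_locales
  note x = \<open>x \<in> U\<close>
  obtain u where u: "\<And>i j k. f x * cotton g x i j k
      = -2 * (pd i f x * ricci g x j k - pd j f x * ricci g x i k) + u i * g x j k - u j * g x i k"
    using miao_tam_cotton[OF x] by blast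
  have "(f x)^2 * cotton_norm2 g x = (f x)\<^sup>2 * tensor_inner (ginv g x) (cotton g x) (cotton g x)"
    by (simp add: cotton_norm2_def tensor_inner_def)
  also have "\<dots> = - 4 * f x * tensor_inner (ginv g x) (cotton g x)
      (\<lambda>i j k. pd i f x * (ricci g x j k - scal g x / 3 * g x j k))"
    by (rule contraction_of_cotton_type_tensor[OF ginv_sym[OF x] metric_ginv[OF x] cotton_antisym
          cotton_trace_free[OF x] u])
  finally show ?thesis
    unfolding tensor_inner_eq_raise3 raise3_tensor_product traceless_ricci_def by (simp add: mult.assoc)
qed

end
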